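(* There is a polynomial-time algorithm that, given two Horn formulae $F_1$ and $F_2$, decides whether the lexicographic orders $[F_1,F_2]$ and $[F_1]$ are equivalent.
   Context: A Horn formula is a CNF formula (a set of clauses) in which every clause contains at most one positive literal. Models are truth assignments. For a formula $F$: $I \leq_F J$ iff $I \models F$ or $J \not\models F$. For a sequence $S=[S_1,\ldots,S_m]$: $I \leq_S J$ iff either $S=[]$, or ($I \leq_{S_1} J$ and (either $J \not\leq_{S_1} I$ or $I \leq_R J$)), where $R=[S_2,\ldots,S_m]$. Two sequences $S$ and $R$ are equivalent if $I \leq_S J$ and $I\leq_R J$ coincide for all pairs of models $I,J$. *)

theory Defs
  imports Main
begin

text \<open>Variables are natural numbers; a literal is a pair (variable, polarity),
  True meaning positive.\<close>

type_synonym literal = "nat \<times> bool"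
type_synonym clause = "literal list"
type_synonym formula = "clause list"
type_synonym model = "nat \<Rightarrow> bool"

definition lit_sat :: "model \<Rightarrow> literal \<Rightarrow> bool" where
  "lit_sat I l = (I (fst l) = snd l)"

definition clause_sat :: "model \<Rightarrow> clause \<Rightarrow> bool" where
  "clause_sat I c = (\<exists>l\<in>set c. lit_sat I l)"

definition models :: "model \<Rightarrow> formula \<Rightarrow> bool" where
  "models I F = (\<forall>c\<in>set F. clause_sat I c)"

definition horn_clause :: "clause \<Rightarrow> bool" where
  "horn_clause c = (card {v. (v, True) \<in> set c} \<le> 1)"

definition horn :: "formula \<Rightarrow> bool" where
  "horn F = (\<forall>c\<in>set F. horn_clause c)"

definition leq_form :: "formula \<Rightarrow> model \<Rightarrow> model \<Rightarrow> bool" where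
  "leq_form F I J = (models I F \<or> \<not> models J F)"

fun leq_seq :: "formula list \<Rightarrow> model \<Rightarrow> model \<Rightarrow> bool" where
  "leq_seq [] I J = True"
| "leq_seq (F # R) I J =
     (leq_form F I J \<and> (\<not> leq_form F J I \<or> leq_seq R I J))"

definition seq_equiv :: "formula list \<Rightarrow> formula list \<Rightarrow> bool" where
  "seq_equiv S R = (\<forall>I J. leq_seq S I J = leq_seq R I J)"

text \<open>Tape symbols are natural numbers, 0 being the blank. A machine is
  (number of states, number of symbols, transition function). State 0 is the
  start state, state 1 is the accepting and state 2 the rejecting halting state.\<close>

datatype dir = Lft | Rgt | Stay

type_synonym tm = "nat \<times> nat \<times> (nat \<Rightarrow> nat \<Rightarrow> nat \<times> nat \<times> dir)"

definition wf_tm :: "tm \<Rightarrow> bool" where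
  "wf_tm M = (case M of (nQ, nS, \<delta>) \<Rightarrow>
     3 \<le> nQ \<and> 7 \<le> nS \<and>
     (\<forall>q<nQ. \<forall>s<nS. fst (\<delta> q s) < nQ \<and> fst (snd (\<delta> q s)) < nS))"

text \<open>Configuration: (state, left part of tape reversed, head symbol, right part).\<close>
type_synonym config = "nat \<times> nat list \<times> nat \<times> nat list"

fun move :: "dir \<Rightarrow> nat list \<Rightarrow> nat \<Rightarrow> nat list \<Rightarrow> nat list \<times> nat \<times> nat list" where
  "move Stay ls s rs = (ls, s, rs)"
| "move Lft [] s rs = ([], 0, s # rs)"
| "move Lft (x # ls) s rs = (ls, x, s # rs)"
| "move Rgt ls s [] = (s # ls, 0, [])"
| "move Rgt ls s (x # rs) = (s # ls, x, rs)"

fun tm_step :: "tm \<Rightarrow> config \<Rightarrow> config" where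
  "tm_step (nQ, nS, \<delta>) (q, ls, h, rs) =
     (if q = 1 \<or> q = 2 then (q, ls, h, rs)
      else (case \<delta> q h of (q', s', d) \<Rightarrow> (q', move d ls s' rs)))"

definition tm_run :: "tm \<Rightarrow> nat \<Rightarrow> config \<Rightarrow> config" where
  "tm_run M n c = (tm_step M ^^ n) c"

definition tm_init :: "nat list \<Rightarrow> config" where
  "tm_init w = (case w of [] \<Rightarrow> (0, [], 0, []) | x # xs \<Rightarrow> (0, [], x, xs))"

definition tm_state :: "config \<Rightarrow> nat" where
  "tm_state c = fst c"

text \<open>Symbols: 1 = bit 0, 2 = bit 1, 3 = positive literal marker,
  4 = negative literal marker, 5 = end of clause, 6 = end of formula.
  Variable indices are written in binary (least significant bit first).\<close>

fun bits :: "nat \<Rightarrow> nat list" where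
  "bits n = (if n = 0 then [] else (if even n then 1 else 2) # bits (n div 2))"

definition enc_lit :: "literal \<Rightarrow> nat list" where
  "enc_lit l = (if snd l then 3 else 4) # bits (fst l)"

definition enc_clause :: "clause \<Rightarrow> nat list" where
  "enc_clause c = concat (map enc_lit c) @ [5]"

definition enc_formula :: "formula \<Rightarrow> nat list" where
  "enc_formula F = concat (map enc_clause F) @ [6]"

definition enc_pair :: "formula \<Rightarrow> formula \<Rightarrow> nat list" where
  "enc_pair F1 F2 = enc_formula F1 @ enc_formula F2"

end

theory Submission
  imports Defs "HOL-Library.Countable"
begin

(* The two lexicographic orders differ iff some pair I, J has models I F1 = models J F1 and
   models J F2 but not models I F2.  Splitting on whether I and J satisfy F1, this happens iff
   (F1 \<and> F2 is satisfiable and F1 \<and> \<not>C is satisfiable for a clause C of F2) or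
   (F2 \<and> \<not>C is satisfiable for a clause C of F1 and \<not>C \<and> \<not>D is satisfiable for clauses C of F1,
   D of F2).  The negation of a clause is a set of unit clauses, so each of these at most
   |F1| * |F2| + |F1| + |F2| + 1 questions is the satisfiability of a Horn formula, decided by
   unit propagation: the least model is built by repeatedly setting the positive literal of a
   clause whose negative literals are all true.
   The machine keeps all of its bookkeeping as marks on the input cells and works in rounds: a
   left-to-right sweep by a finite-state transducer followed by a rewind.  Propagating one
   variable compares its binary name bit by bit with every literal, in O(n) rounds; there are
   at most n variables and O(n^2) queries, and a round costs O(n) steps, so the running time
   is O(n^5). *)

section \<open>Sweep machines\<close>

(* base is the input symbol, the other fields are the marks written by the algorithm. *)
datatype cell = Cell (base: nat) (true_mark: bool) (match_mark: bool) (read_mark: bool)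
  (sel_mark: bool) (force_mark: "bool option")

definition valid_cell :: "cell \<Rightarrow> bool" where
  "valid_cell x = (0 < base x \<and> base x < 8)"

definition nat_of_bool_option :: "bool option \<Rightarrow> nat" where
  "nat_of_bool_option s = (case s of None \<Rightarrow> 0 | Some False \<Rightarrow> 1 | Some True \<Rightarrow> 2)"

definition enc_cell :: "cell \<Rightarrow> nat" where
  "enc_cell x = base x + 8 * (of_bool (true_mark x) + 2 * (of_bool (match_mark x)
      + 2 * (of_bool (read_mark x) + 2 * (of_bool (sel_mark x)
      + 2 * nat_of_bool_option (force_mark x)))))"

definition dec_cell :: "nat \<Rightarrow> cell" where
  "dec_cell n = (let m = n div 8 in Cell (n mod 8) (odd m) (odd (m div 2)) (odd (m div 2 div 2))
     (odd (m div 2 div 2 div 2))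
     (case m div 2 div 2 div 2 div 2 of 0 \<Rightarrow> None | Suc 0 \<Rightarrow> Some False | _ \<Rightarrow> Some True))"

lemma odd_of_bool_add_double: "odd (of_bool t + 2 * (r::nat)) = t"
  by (cases t) auto

lemma of_bool_add_double_div_2: "(of_bool t + 2 * (r::nat)) div 2 = r"
  by (cases t) auto

lemma dec_enc_cell:
  assumes "valid_cell x"
  shows "dec_cell (enc_cell x) = x"
proof (cases x)
  case (Cell b t c k sel s)
  then have "b < 8" using assms by (simp add: valid_cell_def)
  moreover have "(case nat_of_bool_option s of 0 \<Rightarrow> None | Suc 0 \<Rightarrow> Some False | _ \<Rightarrow> Some True) = s"
    by (cases s) (auto simp: nat_of_bool_option_def split: bool.split)
  ultimately show ?thesis unfolding Cell enc_cell_def dec_cell_def Let_def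
    by (simp only: cell.sel div_mult_self2 mod_mult_self2 div_less mod_less zero_neq_numeral
        add_0 add_0_right odd_of_bool_add_double of_bool_add_double_div_2)
qed

lemma enc_cell_less: "valid_cell x \<Longrightarrow> enc_cell x < 384"
proof -
  assume "valid_cell x"
  moreover have "nat_of_bool_option (force_mark x) \<le> 2"
    by (auto simp: nat_of_bool_option_def split: option.split bool.split)
  ultimately show ?thesis unfolding enc_cell_def valid_cell_def
    by (cases "true_mark x"; cases "match_mark x"; cases "read_mark x"; cases "sel_mark x"; simp)
qed

lemma enc_cell_pos: "valid_cell x \<Longrightarrow> 0 < enc_cell x"
  unfolding enc_cell_def valid_cell_def by simp

fun sweep :: "('s \<Rightarrow> cell \<Rightarrow> 's \<times> cell) \<Rightarrow> 's \<Rightarrow> cell list \<Rightarrow> 's \<times> cell list" where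
  "sweep d s [] = (s, [])"
| "sweep d s (x # xs) = (case d s x of (s1, y) \<Rightarrow> (case sweep d s1 xs of (s2, ys) \<Rightarrow> (s2, y # ys)))"

datatype 's outcome = Cont 's | Acc | Rej

fun sweep_round :: "('s \<Rightarrow> cell \<Rightarrow> 's \<times> cell) \<Rightarrow> ('s \<Rightarrow> 's outcome) \<Rightarrow>
    's outcome \<times> cell list \<Rightarrow> 's outcome \<times> cell list" where
  "sweep_round d fin (Cont s, xs) = (case sweep d s xs of (s', ys) \<Rightarrow> (fin s', ys))"
| "sweep_round d fin (Acc, xs) = (Acc, xs)"
| "sweep_round d fin (Rej, xs) = (Rej, xs)"

lemma sweep_round_halted: "r = Acc \<or> r = Rej \<Longrightarrow> (sweep_round d fin ^^ K) (r, xs) = (r, xs)"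
  by (induction K) auto

lemma sweep_append:
  "sweep d s (xs @ ys) =
    (case sweep d s xs of (s1, xs') \<Rightarrow> (case sweep d s1 ys of (s2, ys') \<Rightarrow> (s2, xs' @ ys')))"
  by (induction xs arbitrary: s) (auto split: prod.split)

lemma sweep_Cons_split:
  obtains s1 y s2 ys where "d s x = (s1, y)" "sweep d s1 xs = (s2, ys)"
    "sweep d s (x # xs) = (s2, y # ys)"
  by (cases "d s x", cases "sweep d (fst (d s x)) xs") auto

lemma sweep_length: "length (snd (sweep d s xs)) = length xs"
proof (induction xs arbitrary: s)
  case (Cons x xs)
  obtain s1 y s2 ys where "sweep d s1 xs = (s2, ys)" "sweep d s (x # xs) = (s2, y # ys)"
    by (rule sweep_Cons_split)
  then show ?case using Cons.IH[of s1] by simp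
qed simp

lemma sweep_base:
  assumes "\<forall>s x. base (snd (d s x)) = base x"
  shows "map base (snd (sweep d s xs)) = map base xs"
proof (induction xs arbitrary: s)
  case (Cons x xs)
  obtain s1 y s2 ys where "d s x = (s1, y)" "sweep d s1 xs = (s2, ys)"
    "sweep d s (x # xs) = (s2, y # ys)"
    by (rule sweep_Cons_split)
  then show ?case using Cons.IH[of s1] assms by (metis list.simps(9) snd_conv)
qed simp

lemma valid_cell_sweep:
  assumes "\<forall>s x. base (snd (d s x)) = base x" and "\<forall>x\<in>set xs. valid_cell x"
  shows "\<forall>x\<in>set (snd (sweep d s xs)). valid_cell x"
proof -
  have "base ` set (snd (sweep d s xs)) = base ` set xs"
    using sweep_base[OF assms(1)] by (metis set_map)
  then show ?thesis using assms(2) unfolding valid_cell_def by (metis image_iff)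
qed

(* Machine states: 4 * state_code s0 s sweeps right in sweep state s, 4 * to_nat s + 3 rewinds
   to the left end before sweeping in s; 1 and 2 halt.  The start state s0 gets code 0 because
   the machine starts in state 0. *)
definition state_code :: "'s::countable \<Rightarrow> 's \<Rightarrow> nat" where
  "state_code s0 s = (if s = s0 then 0 else Suc (to_nat s))"

definition code_state :: "'s::countable \<Rightarrow> nat \<Rightarrow> 's" where
  "code_state s0 n = (if n = 0 then s0 else from_nat (n - 1))"

lemma code_state_inverse [simp]: "code_state s0 (state_code s0 s) = s"
  by (auto simp: code_state_def state_code_def)

definition sweep_delta :: "('s::countable \<Rightarrow> cell \<Rightarrow> 's \<times> cell) \<Rightarrow> ('s \<Rightarrow> 's outcome) \<Rightarrow> 's \<Rightarrow>
    nat \<Rightarrow> nat \<Rightarrow> nat \<times> nat \<times> dir" where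
  "sweep_delta d fin s0 q sy =
    (if q mod 4 = 0 then (let s = code_state s0 (q div 4) in
       if sy = 0 then (case fin s of Acc \<Rightarrow> (1, 0, Stay) | Rej \<Rightarrow> (2, 0, Stay)
                                   | Cont s' \<Rightarrow> (4 * to_nat s' + 3, 0, Lft))
       else (case d s (dec_cell sy) of (s', y) \<Rightarrow> (4 * state_code s0 s', min (enc_cell y) 383, Rgt)))
     else if q mod 4 = 3 then (let s = (from_nat (q div 4) :: 's) in
       if sy = 0 then (4 * state_code s0 s, 0, Rgt) else (q, sy, Lft))
     else (0, 0, Stay))"

definition sweep_tm :: "('s::countable \<Rightarrow> cell \<Rightarrow> 's \<times> cell) \<Rightarrow> ('s \<Rightarrow> 's outcome) \<Rightarrow> 's \<Rightarrow> tm" where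
  "sweep_tm d fin s0 = (4 * (Max (to_nat ` (UNIV :: 's set)) + 2), 384, sweep_delta d fin s0)"

lemma wf_sweep_tm:
  fixes d :: "'s::countable \<Rightarrow> cell \<Rightarrow> 's \<times> cell"
  assumes "finite (UNIV :: 's set)"
  shows "wf_tm (sweep_tm d fin s0)"
proof -
  let ?B = "Max (to_nat ` (UNIV :: 's set))"
  have le: "to_nat (s::'s) \<le> ?B" for s using assms by (intro Max_ge) auto
  have sweeping: "4 * state_code s0 s < 4 * ?B + 8" for s
    using le[of s] by (auto simp: state_code_def)
  have rewinding: "4 * to_nat s + 3 < 4 * ?B + 8" for s :: 's
    using le[of s] by linarith
  have "fst (sweep_delta d fin s0 q a) < 4 * ?B + 8 \<and> fst (snd (sweep_delta d fin s0 q a)) < 384"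
    if "q < 4 * ?B + 8" "a < 384" for q a
  proof (cases "q mod 4 = 0 \<and> a = 0")
    case True
    then show ?thesis using rewinding unfolding sweep_delta_def Let_def
      by (cases "fin (code_state s0 (q div 4))") simp_all
  next
    case False
    obtain s' y where "d (code_state s0 (q div 4)) (dec_cell a) = (s', y)" by fastforce
    then show ?thesis using False that sweeping unfolding sweep_delta_def Let_def by auto
  qed
  then show ?thesis unfolding wf_tm_def sweep_tm_def by (simp add: add.commute)
qed

lemma control_states_not_halting:
  "4 * (n::nat) \<noteq> 1" "4 * (n::nat) \<noteq> 2" "4 * (n::nat) + 3 \<noteq> 1" "4 * (n::nat) + 3 \<noteq> 2"
  by presburger+

lemma sweep_tm_step_right:
  assumes "valid_cell x" "d s x = (s1, y)" "base y = base x"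
  shows "tm_step (sweep_tm d fin s0) (4 * state_code s0 s, L, enc_cell x, R) =
    (4 * state_code s0 s1, move Rgt L (enc_cell y) R)"
proof -
  have "enc_cell x \<noteq> 0" "dec_cell (enc_cell x) = x" "min (enc_cell y) 383 = enc_cell y"
    using assms enc_cell_pos dec_enc_cell enc_cell_less[of y] by (auto simp: valid_cell_def)
  then show ?thesis
    using assms(2) control_states_not_halting by (simp add: sweep_tm_def sweep_delta_def)
qed

lemma sweep_tm_step_end:
  "tm_step (sweep_tm d fin s0) (4 * state_code s0 s, L, 0, R) =
    (case fin s of Acc \<Rightarrow> (1, L, 0, R) | Rej \<Rightarrow> (2, L, 0, R)
     | Cont s' \<Rightarrow> (4 * to_nat s' + 3, move Lft L 0 R))"
  using control_states_not_halting
  by (simp add: sweep_tm_def sweep_delta_def split: outcome.split)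

lemma sweep_tm_step_left:
  fixes s s0 :: "'s::countable"
  shows "tm_step (sweep_tm d fin s0) (4 * to_nat s + 3, L, h, R) =
    (if h = 0 then (4 * state_code s0 s, move Rgt L 0 R) else (4 * to_nat s + 3, move Lft L h R))"
proof -
  have "(4 * to_nat s + 3) mod 4 = 3" "(4 * to_nat s + 3) div 4 = to_nat s" by presburger+
  then show ?thesis using control_states_not_halting by (simp add: sweep_tm_def sweep_delta_def)
qed

lemma tm_run_halt: "q = 1 \<or> q = 2 \<Longrightarrow> tm_run M n (q, c) = (q, c)"
proof -
  assume "q = 1 \<or> q = 2"
  then have "tm_step M (q, c) = (q, c)" by (cases M; cases c) auto
  then show ?thesis unfolding tm_run_def by (induction n) auto
qed

lemma tm_run_Suc: "tm_run M (Suc n) c = tm_run M n (tm_step M c)"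
  unfolding tm_run_def by (simp only: funpow_Suc_right comp_def)

lemma tm_run_add: "tm_run M (m + n) c = tm_run M n (tm_run M m c)"
  unfolding tm_run_def by (simp only: add.commute[of m n] funpow_add comp_def)

lemma sweep_tm_forward:
  assumes pres: "\<forall>s x. base (snd (d s x)) = base x"
  shows "\<forall>x\<in>set (x # xs). valid_cell x \<Longrightarrow>
    tm_run (sweep_tm d fin s0) (Suc (length xs))
      (4 * state_code s0 s, L, enc_cell x, map enc_cell xs @ replicate b 0) =
    (case sweep d s (x # xs) of (s', ys) \<Rightarrow>
      (4 * state_code s0 s', rev (map enc_cell ys) @ L, 0, replicate (b - 1) 0))"
proof (induction xs arbitrary: s L x)
  case Nil
  obtain s1 y where 1: "d s x = (s1, y)" by fastforce
  have "base y = base x" using pres 1 by (metis snd_conv)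
  then show ?case using Nil 1 by (simp add: tm_run_Suc sweep_tm_step_right tm_run_def) (cases b; simp)
next
  case (Cons x2 xs)
  obtain s1 y where 1: "d s x = (s1, y)" by fastforce
  have "base y = base x" using pres 1 by (metis snd_conv)
  then have "tm_step (sweep_tm d fin s0)
      (4 * state_code s0 s, L, enc_cell x, map enc_cell (x2 # xs) @ replicate b 0) =
    (4 * state_code s0 s1, enc_cell y # L, enc_cell x2, map enc_cell xs @ replicate b 0)"
    using Cons.prems 1 by (simp add: sweep_tm_step_right)
  then show ?case unfolding tm_run_Suc[of _ "Suc (length xs)"] length_Cons
    using Cons.IH[of x2 s1 "enc_cell y # L"] Cons.prems 1 by (simp split: prod.split)
qed

lemma sweep_tm_backward:
  fixes s s0 :: "'s::countable"
  shows "\<forall>z\<in>set (y # zs). valid_cell z \<Longrightarrow>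
    tm_run (sweep_tm d fin s0) (Suc (length zs))
      (4 * to_nat s + 3, map enc_cell zs @ replicate a 0, enc_cell y, R) =
    (4 * to_nat s + 3, replicate (a - 1) 0, 0, map enc_cell (rev zs @ [y]) @ R)"
proof (induction zs arbitrary: y R)
  case Nil
  have "enc_cell y \<noteq> 0" using Nil enc_cell_pos by fastforce
  then show ?case by (simp add: tm_run_Suc sweep_tm_step_left tm_run_def) (cases a; simp)
next
  case (Cons z zs)
  have "enc_cell y \<noteq> 0" using Cons.prems enc_cell_pos by fastforce
  then show ?case unfolding tm_run_Suc[of _ "Suc (length zs)"] length_Cons
    using Cons.IH[of z "enc_cell y # R"] Cons.prems by (simp add: sweep_tm_step_left)
qed

lemma rev_map_last_butlast: "ys \<noteq> [] \<Longrightarrow> rev (map f ys) = f (last ys) # map f (rev (butlast ys))"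
  by (cases ys rule: rev_cases) (auto simp: rev_map)

lemma sweep_tm_round_Cont:
  fixes s s0 s'' :: "'s::countable"
  assumes pres: "\<forall>s x. base (snd (d s x)) = base x" and v: "\<forall>x\<in>set (x # xs). valid_cell x"
    and sw: "sweep d s (x # xs) = (s', ys)" and f: "fin s' = Cont s''"
  shows "\<exists>a' b' y ys'. ys = y # ys' \<and>
    tm_run (sweep_tm d fin s0) (2 * length (x # xs) + 2)
      (4 * state_code s0 s, replicate a 0, enc_cell x, map enc_cell xs @ replicate b 0) =
    (4 * state_code s0 s'', replicate a' 0, enc_cell y, map enc_cell ys' @ replicate b' 0)"
proof -
  let ?M = "sweep_tm d fin s0"
  have len: "length ys = Suc (length xs)" using sweep_length[of d s "x # xs"] sw by simp
  then obtain y ys' where ys: "ys = y # ys'" by (cases ys) auto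
  have vys: "\<forall>z\<in>set ys. valid_cell z" using valid_cell_sweep[OF pres v, of s] sw by simp
  have rev_ys: "rev (map enc_cell ys) = enc_cell (last ys) # map enc_cell (rev (butlast ys))"
    using ys by (simp add: rev_map_last_butlast)
  have forward: "tm_run ?M (Suc (length xs))
      (4 * state_code s0 s, replicate a 0, enc_cell x, map enc_cell xs @ replicate b 0) =
    (4 * state_code s0 s', rev (map enc_cell ys) @ replicate a 0, 0, replicate (b - 1) 0)"
    using sweep_tm_forward[OF pres v, of fin s0 s "replicate a 0" b] sw by simp
  have turn: "tm_step ?M (4 * state_code s0 s', rev (map enc_cell ys) @ replicate a 0, 0,
      replicate (b - 1) 0) =
    (4 * to_nat s'' + 3, map enc_cell (rev (butlast ys)) @ replicate a 0, enc_cell (last ys),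
      0 # replicate (b - 1) 0)"
    unfolding sweep_tm_step_end f rev_ys by simp
  have ne: "ys \<noteq> []" using ys by simp
  have lz: "length (rev (butlast ys)) = length xs" using len by simp
  have "\<forall>z\<in>set (last ys # rev (butlast ys)). valid_cell z"
    using vys ne by (auto dest: in_set_butlastD)
  then have backward: "tm_run ?M (Suc (length xs))
      (4 * to_nat s'' + 3, map enc_cell (rev (butlast ys)) @ replicate a 0, enc_cell (last ys),
        0 # replicate (b - 1) 0) =
    (4 * to_nat s'' + 3, replicate (a - 1) 0, 0, map enc_cell ys @ 0 # replicate (b - 1) 0)"
    using sweep_tm_backward[of "last ys" "rev (butlast ys)" d fin s0 s'' a "0 # replicate (b - 1) 0"]
      lz ne len by (simp add: append_butlast_last_id)
  have restart: "tm_step ?M (4 * to_nat s'' + 3, replicate (a - 1) 0, 0, map enc_cell ys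
      @ 0 # replicate (b - 1) 0) =
    (4 * state_code s0 s'', replicate (Suc (a - 1)) 0, enc_cell y, map enc_cell ys'
        @ replicate (Suc (b - 1)) 0)"
    unfolding sweep_tm_step_left ys by simp
  have "2 * length (x # xs) + 2 = Suc (length xs) + (1 + (Suc (length xs) + 1))" by simp
  then have "tm_run ?M (2 * length (x # xs) + 2)
      (4 * state_code s0 s, replicate a 0, enc_cell x, map enc_cell xs @ replicate b 0) =
    (4 * state_code s0 s'', replicate (Suc (a - 1)) 0, enc_cell y, map enc_cell ys'
        @ replicate (Suc (b - 1)) 0)"
    using forward turn backward restart by (simp only: tm_run_add tm_run_Suc) (simp add: tm_run_def)
  then show ?thesis using ys by blast
qed

lemma sweep_tm_round_halt:
  fixes s s0 :: "'s::countable"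
  assumes pres: "\<forall>s x. base (snd (d s x)) = base x" and v: "\<forall>x\<in>set (x # xs). valid_cell x"
    and sw: "sweep d s (x # xs) = (s', ys)" and r: "fin s' = r" "r = Acc \<or> r = Rej"
    and T: "length (x # xs) < T"
  shows "tm_state (tm_run (sweep_tm d fin s0) T
      (4 * state_code s0 s, replicate a 0, enc_cell x, map enc_cell xs @ replicate b 0)) =
    (if r = Acc then 1 else 2)"
proof -
  let ?M = "sweep_tm d fin s0" and ?c = "(rev (map enc_cell ys) @ replicate a 0, 0, replicate (b - 1) 0)"
    and ?init = "(4 * state_code s0 s, replicate a 0, enc_cell x, map enc_cell xs @ replicate b 0)"
  have forward: "tm_run ?M (Suc (length xs)) ?init = (4 * state_code s0 s', ?c)"
    using sweep_tm_forward[OF pres v, of fin s0 s "replicate a 0" b] sw by simp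
  have "tm_step ?M (4 * state_code s0 s', ?c) = (if r = Acc then 1 else 2, ?c)"
    using r by (auto simp: sweep_tm_step_end)
  moreover have "tm_run M 1 c = tm_step M c" for M c by (simp add: tm_run_def)
  ultimately have halt: "tm_run ?M (1 + n) (4 * state_code s0 s', ?c) = (if r = Acc then 1 else 2, ?c)"
    for n by (simp only: tm_run_add) (simp add: tm_run_halt)
  have "T = Suc (length xs) + (1 + (T - Suc (length xs) - 1))" using T by simp
  then have "tm_run ?M T ?init = tm_run ?M (1 + (T - Suc (length xs) - 1))
      (tm_run ?M (Suc (length xs)) ?init)"
    by (metis tm_run_add)
  then show ?thesis using forward halt by (simp add: tm_state_def)
qed

theorem sweep_tm_simulates:
  fixes s s0 :: "'s::countable"
  assumes pres: "\<forall>s x. base (snd (d s x)) = base x"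
  shows "\<forall>x\<in>set (x # xs). valid_cell x \<Longrightarrow> (sweep_round d fin ^^ K) (Cont s, x # xs) = (r, zs) \<Longrightarrow>
    r = Acc \<or> r = Rej \<Longrightarrow> K * (2 * length (x # xs) + 2) \<le> T \<Longrightarrow>
    tm_state (tm_run (sweep_tm d fin s0) T
      (4 * state_code s0 s, replicate a 0, enc_cell x, map enc_cell xs @ replicate b 0)) =
    (if r = Acc then 1 else 2)"
proof (induction K arbitrary: s x xs a b T)
  case 0
  then show ?case by auto
next
  case (Suc K)
  obtain s' ys where sw: "sweep d s (x # xs) = (s', ys)" by fastforce
  have rounds: "(sweep_round d fin ^^ K) (fin s', ys) = (r, zs)"
    using Suc.prems(2) sw by (simp add: funpow_Suc_right del: funpow.simps)
  show ?case
  proof (cases "fin s'")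
    case (Cont s'')
    let ?n = "2 * length (x # xs) + 2"
    obtain a' b' y ys' where ys: "ys = y # ys'" and run: "tm_run (sweep_tm d fin s0) ?n
        (4 * state_code s0 s, replicate a 0, enc_cell x, map enc_cell xs @ replicate b 0) =
      (4 * state_code s0 s'', replicate a' 0, enc_cell y, map enc_cell ys' @ replicate b' 0)"
      using sweep_tm_round_Cont[where d=d and fin=fin and x=x and xs=xs and s=s and s'=s' and ys=ys
          and s''=s'' and a=a and b=b, OF pres Suc.prems(1) sw Cont] by blast
    have "length (y # ys') = length (x # xs)" using sweep_length[of d s "x # xs"] sw ys by simp
    then have T: "T = ?n + (T - ?n)" and T': "K * (2 * length (y # ys') + 2) \<le> T - ?n"
      using Suc.prems(4) by auto
    have "\<forall>z\<in>set (y # ys'). valid_cell z" using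
        valid_cell_sweep[OF pres Suc.prems(1), of s] sw ys by simp
    then have "tm_state (tm_run (sweep_tm d fin s0) (T - ?n)
        (4 * state_code s0 s'', replicate a' 0, enc_cell y, map enc_cell ys' @ replicate b' 0)) =
      (if r = Acc then 1 else 2)"
      using Suc.IH[OF _ _ Suc.prems(3) T'] rounds Cont ys by simp
    then show ?thesis using run by (subst T) (simp only: tm_run_add)
  next
    case Acc
    then show ?thesis using sweep_tm_round_halt[OF pres Suc.prems(1) sw] rounds Suc.prems(4)
      sweep_round_halted[of Acc K d fin ys] by auto
  next
    case Rej
    then show ?thesis using sweep_tm_round_halt[OF pres Suc.prems(1) sw] rounds Suc.prems(4)
      sweep_round_halted[of Rej K d fin ys] by auto
  qed
qed

section \<open>Literal-level description of a sweep\<close>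

declare bits.simps[simp del]

datatype bit_mode = Bits_Keep | Bits_Read | Bits_Reset

(* A literal-level transducer is given by a bit mode, saying what happens to the read marks
   of the variable names, and by functions called at the end of each literal and each clause.
   Their arguments are the control state, the index of the current formula (False for F1), the
   polarity and first unread bit of the literal and its two marks, resp. the selection and
   forcing marks of the clause; they return the new state and the new marks. *)
type_synonym 'u lit_fun = "'u \<Rightarrow> bool \<Rightarrow> bool \<Rightarrow> bool option \<Rightarrow> bool \<Rightarrow> bool \<Rightarrow> 'u \<times> bool \<times> bool"
type_synonym 'u clause_fun = "'u \<Rightarrow> bool \<Rightarrow> bool \<Rightarrow> bool option \<Rightarrow> 'u \<times> bool \<times> bool option"

(* The parse state records whether F2 has been reached and, inside a literal, its polarity and
   its first unread bit. *)
type_synonym parse_state = "bool \<times> (bool \<times> bool option) option"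

definition cell_step :: "('u \<Rightarrow> bit_mode) \<Rightarrow> 'u lit_fun \<Rightarrow> 'u clause_fun \<Rightarrow>
    parse_state \<times> 'u \<Rightarrow> cell \<Rightarrow> (parse_state \<times> 'u) \<times> cell" where
  "cell_step bm lf cf st x = (case st of ((r, cur), u) \<Rightarrow>
    (if base x = 1 \<or> base x = 2 then
      (case cur of None \<Rightarrow> (((r, cur), u), x)
       | Some (p, fu) \<Rightarrow> (let fresh = (fu = None \<and> \<not> read_mark x);
            fu' = (if fresh then Some (base x = 2) else fu);
            k' = (case bm u of Bits_Keep \<Rightarrow> read_mark x | Bits_Read \<Rightarrow> read_mark x \<or> fresh
                  | Bits_Reset \<Rightarrow> False)
          in (((r, Some (p, fu')), u), Cell (base x) (true_mark x) (match_mark x) k'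
              (sel_mark x) (force_mark x))))
    else if base x = 3 \<or> base x = 4 then
      (case cur of None \<Rightarrow> (((r, Some (base x = 3, None)), u), x)
       | Some (p, fu) \<Rightarrow> (case lf u r p fu (true_mark x) (match_mark x) of (u', t', c') \<Rightarrow>
           (((r, Some (base x = 3, None)), u'),
               Cell (base x) t' c' (read_mark x) (sel_mark x) (force_mark x))))
    else if base x = 5 then
      (case (case cur of None \<Rightarrow> (u, true_mark x, match_mark x)
                       | Some (p, fu) \<Rightarrow> lf u r p fu (true_mark x) (match_mark x)) of
        (u1, t', c') \<Rightarrow> (case cf u1 r (sel_mark x) (force_mark x) of (u2, sel', s') \<Rightarrow>
          (((r, None), u2), Cell 5 t' c' (read_mark x) sel' s')))
    else if base x = 6 then (((True, None), u), x)
    else (((r, cur), u), x)))"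

lemma base_cell_step: "base (snd (cell_step bm lf cf st x)) = base x"
  unfolding cell_step_def Let_def by (auto split: prod.split option.split)

(* lread is the number of bits of the variable name already read; ltrue says that the variable
   is known to be true, lmatch that the name agrees with the variable being propagated on the
   bits read so far. *)
record lit_info = lvar :: nat  lpos :: bool  lread :: nat  ltrue :: bool  lmatch :: bool
record clause_info = lits :: "lit_info list"  selected :: bool  forcing :: "bool option"

definition next_bit :: "lit_info \<Rightarrow> bool option" where
  "next_bit l = (if lread l < length (bits (lvar l)) then Some (bits (lvar l) ! lread l = 2) else None)"

definition advance_read :: "bit_mode \<Rightarrow> lit_info \<Rightarrow> nat" where
  "advance_read m l = (case m of Bits_Keep \<Rightarrow> lread l
     | Bits_Read \<Rightarrow> (if lread l < length (bits (lvar l)) then Suc (lread l) else lread l)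
     | Bits_Reset \<Rightarrow> 0)"

fun bit_cells :: "nat \<Rightarrow> nat list \<Rightarrow> cell list" where
  "bit_cells j [] = []"
| "bit_cells j (s # ss) = Cell s False False (0 < j) False None # bit_cells (j - 1) ss"

(* The marks of a literal are stored on the cell following its name (the next sign or the end
   of the clause): a left-to-right sweep updates them only after having read the name. *)
fun lits_cells :: "bool \<times> bool \<Rightarrow> lit_info list \<Rightarrow> bool \<Rightarrow> bool option \<Rightarrow> cell list" where
  "lits_cells pf [] sel s = [Cell 5 (fst pf) (snd pf) False sel s]"
| "lits_cells pf (l # ls) sel s = Cell (if lpos l then 3 else 4) (fst pf) (snd pf) False False None
     # bit_cells (lread l) (bits (lvar l)) @ lits_cells (ltrue l, lmatch l) ls sel s"

definition clause_cells :: "clause_info \<Rightarrow> cell list" where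
  "clause_cells c = lits_cells (False, False) (lits c) (selected c) (forcing c)"

definition formula_end :: cell where "formula_end = Cell 6 False False False False None"

definition formula_cells :: "clause_info list \<Rightarrow> cell list" where
  "formula_cells A = concat (map clause_cells A) @ [formula_end]"

definition tape_cells :: "clause_info list \<Rightarrow> clause_info list \<Rightarrow> cell list" where
  "tape_cells A1 A2 = formula_cells A1 @ formula_cells A2"

fun lits_sweep :: "('u \<Rightarrow> bit_mode) \<Rightarrow> 'u lit_fun \<Rightarrow> 'u \<Rightarrow> bool \<Rightarrow> lit_info list \<Rightarrow>
    'u \<times> lit_info list" where
  "lits_sweep bm lf u r [] = (u, [])"
| "lits_sweep bm lf u r (l # ls) = (case lf u r (lpos l) (next_bit l) (ltrue l)
    (lmatch l) of (u1, t', c') \<Rightarrow>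
     (case lits_sweep bm lf u1 r ls of (u2, ls') \<Rightarrow>
       (u2, l\<lparr>lread := advance_read (bm u) l, ltrue := t', lmatch := c'\<rparr> # ls')))"

definition lits_end_sweep :: "('u \<Rightarrow> bit_mode) \<Rightarrow> 'u lit_fun \<Rightarrow> 'u clause_fun \<Rightarrow> 'u \<Rightarrow> bool \<Rightarrow>
    lit_info list \<Rightarrow> bool \<Rightarrow> bool option \<Rightarrow> 'u \<times> lit_info list \<times> bool \<times> bool option" where
  "lits_end_sweep bm lf cf u r ls sel s = (case lits_sweep bm lf u r ls of (u1, ls') \<Rightarrow>
     (case cf u1 r sel s of (u2, sel', s') \<Rightarrow> (u2, ls', sel', s')))"

definition clause_sweep :: "('u \<Rightarrow> bit_mode) \<Rightarrow> 'u lit_fun \<Rightarrow> 'u clause_fun \<Rightarrow> 'u \<Rightarrow> bool \<Rightarrow>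
    clause_info \<Rightarrow> 'u \<times> clause_info" where
  "clause_sweep bm lf cf u r c =
    (case lits_end_sweep bm lf cf u r (lits c) (selected c) (forcing c) of (u2, ls', sel', s') \<Rightarrow>
     (u2, c\<lparr>lits := ls', selected := sel', forcing := s'\<rparr>))"

fun formula_sweep :: "('u \<Rightarrow> bit_mode) \<Rightarrow> 'u lit_fun \<Rightarrow> 'u clause_fun \<Rightarrow> 'u \<Rightarrow> bool \<Rightarrow>
    clause_info list \<Rightarrow> 'u \<times> clause_info list" where
  "formula_sweep bm lf cf u r [] = (u, [])"
| "formula_sweep bm lf cf u r (c # A) = (case clause_sweep bm lf cf u r c of (u1, c') \<Rightarrow>
     (case formula_sweep bm lf cf u1 r A of (u2, A') \<Rightarrow> (u2, c' # A')))"

definition tape_sweep :: "('u \<Rightarrow> bit_mode) \<Rightarrow> 'u lit_fun \<Rightarrow> 'u clause_fun \<Rightarrow> 'u \<Rightarrow>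
    clause_info list \<Rightarrow> clause_info list \<Rightarrow> 'u \<times> clause_info list \<times> clause_info list" where
  "tape_sweep bm lf cf u A1 A2 = (case formula_sweep bm lf cf u False A1 of (u1, A1') \<Rightarrow>
     (case formula_sweep bm lf cf u1 True A2 of (u2, A2') \<Rightarrow> (u2, A1', A2')))"

lemma set_bits: "set (bits n) \<subseteq> {1, 2}"
  by (induction n rule: bits.induct) (subst bits.simps, auto)

lemma sweep_bit_cells:
  assumes "set ss \<subseteq> {1, 2}"
  shows "sweep (cell_step bm lf cf) ((r, Some (p, fu0)), u) (bit_cells j ss) =
    (((r, Some (p, case fu0 of Some f \<Rightarrow> Some f | None
        \<Rightarrow> (if j < length ss then Some (ss ! j = 2) else None))), u),
     bit_cells (case bm u of Bits_Keep \<Rightarrow> j | Bits_Reset \<Rightarrow> 0 | Bits_Read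
         \<Rightarrow> (if fu0 = None \<and> j < length ss then Suc j else j)) ss)"
  using assms
proof (induction ss arbitrary: j fu0)
  case Nil
  then show ?case by (cases "bm u"; cases fu0; simp)
next
  case (Cons s ss)
  have "s = 1 \<or> s = 2" using Cons.prems by auto
  then show ?case using Cons by (cases j; cases "bm u"; cases fu0; auto simp: cell_step_def Let_def)
qed

lemma sweep_lit_bits:
  "sweep (cell_step bm lf cf) ((r, Some (p, None)), u) (bit_cells (lread l) (bits (lvar l))) =
   (((r, Some (p, next_bit l)), u), bit_cells (advance_read (bm u) l) (bits (lvar l)))"
  using sweep_bit_cells[OF set_bits, of bm lf cf r p None u "lread l" "lvar l"]
  by (cases "bm u") (simp_all add: next_bit_def advance_read_def)

lemma sweep_lits_cells:
  "sweep (cell_step bm lf cf) ((r, Some (p, fu)), u) (lits_cells (t, c) ls sel s) =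
    (case lf u r p fu t c of (u1, t', c') \<Rightarrow> (case lits_end_sweep bm lf cf u1 r ls sel s of
        (u2, ls', sel', s') \<Rightarrow>
      (((r, None), u2), lits_cells (t', c') ls' sel' s')))"
proof (induction ls arbitrary: p fu t c u)
  case Nil
  show ?case by (auto simp: cell_step_def lits_end_sweep_def split: prod.split)
next
  case (Cons l ls)
  obtain u1 t' c' where 1: "lf u r p fu t c = (u1, t', c')" by (metis prod.exhaust)
  have m: "cell_step bm lf cf ((r, Some (p, fu)), u)
      (Cell (if lpos l then 3 else 4) t c False False None)
     = (((r, Some (lpos l, None)), u1), Cell (if lpos l then 3 else 4) t' c' False False None)"
    using 1 by (simp add: cell_step_def)
  obtain u2 t'' c'' where 2: "lf u1 r (lpos l) (next_bit l) (ltrue l) (lmatch l)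
      = (u2, t'', c'')" by (metis prod.exhaust)
  obtain u3 ls' sel' s' where 3: "lits_end_sweep bm lf cf u2 r ls sel s
      = (u3, ls', sel', s')" by (metis prod.exhaust)
  have IH: "sweep (cell_step bm lf cf) ((r, Some (lpos l, next_bit l)), u1)
      (lits_cells (ltrue l, lmatch l) ls sel s) =
     (((r, None), u3), lits_cells (t'', c'') ls' sel' s')" using
         Cons.IH[where p="lpos l" and fu="next_bit l" and t="ltrue l" and c="lmatch l"
         and u=u1] 2 3 by simp
  obtain ls'' where 4: "lits_sweep bm lf u2 r ls = (ls'', ls')" and 5: "cf ls'' r sel s = (u3, sel', s')"
    using 3 unfolding lits_end_sweep_def by (auto split: prod.splits)
  have A: "lits_end_sweep bm lf cf u1 r (l # ls) sel s
      = (u3, l\<lparr>lread := advance_read (bm u1) l, ltrue := t'', lmatch := c''\<rparr> # ls', sel', s')"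
    unfolding lits_end_sweep_def using 2 4 5 by simp
  show ?case using m IH A 1 by (simp add: sweep_lit_bits sweep_append)
qed

lemma sweep_clause_cells:
  "sweep (cell_step bm lf cf) ((r, None), u) (clause_cells c) =
    (case clause_sweep bm lf cf u r c of (u2, c') \<Rightarrow> (((r, None), u2), clause_cells c'))"
proof (cases "lits c")
  case Nil
  then show ?thesis by (auto simp: cell_step_def clause_cells_def clause_sweep_def
      lits_end_sweep_def split: prod.split)
next
  case (Cons l ls)
  have m: "cell_step bm lf cf ((r, None), u) (Cell (if lpos l then 3 else 4) False
      False False False None)
     = (((r, Some (lpos l, None)), u), Cell (if lpos l then 3 else 4) False False False False None)"
    by (simp add: cell_step_def)
  obtain u1 t' c' where 1: "lf u r (lpos l) (next_bit l) (ltrue l) (lmatch l)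
      = (u1, t', c')" by (metis prod.exhaust)
  obtain u3 ls' sel' s' where 3: "lits_end_sweep bm lf cf u1 r ls (selected c) (forcing c)
      = (u3, ls', sel', s')" by (metis prod.exhaust)
  obtain ls'' where 4: "lits_sweep bm lf u1 r ls
      = (ls'', ls')" and 5: "cf ls'' r (selected c) (forcing c) = (u3, sel', s')"
    using 3 unfolding lits_end_sweep_def by (auto split: prod.splits)
  have A: "clause_sweep bm lf cf u r c = (u3, c\<lparr>lits := l\<lparr>lread := advance_read (bm u) l,
      ltrue := t', lmatch := c'\<rparr> # ls', selected := sel', forcing := s'\<rparr>)"
    unfolding clause_sweep_def lits_end_sweep_def using Cons 1 4 5 by simp
  show ?thesis unfolding clause_cells_def A using Cons m 1 3
    by (simp add: sweep_lit_bits sweep_append sweep_lits_cells)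
qed

lemma sweep_formula_clauses:
  "sweep (cell_step bm lf cf) ((r, None), u) (concat (map clause_cells A)) =
    (case formula_sweep bm lf cf u r A of (u2, A') \<Rightarrow> (((r, None), u2), concat (map clause_cells A')))"
proof (induction A arbitrary: u)
  case (Cons c A)
  then show ?case by (auto simp: sweep_append sweep_clause_cells split: prod.split)
qed simp

lemma sweep_formula_end: "sweep (cell_step bm lf cf) ((r, None), u) [formula_end]
    = (((True, None), u), [formula_end])"
  by (simp add: formula_end_def cell_step_def)

lemma sweep_tape_cells:
  "sweep (cell_step bm lf cf) ((False, None), u) (tape_cells A1 A2) =
    (case tape_sweep bm lf cf u A1 A2 of (u2, A1', A2') \<Rightarrow> (((True, None), u2), tape_cells A1' A2'))"
proof -
  obtain u1 A1' where 1: "formula_sweep bm lf cf u False A1 = (u1, A1')" by fastforce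
  obtain u2 A2' where 2: "formula_sweep bm lf cf u1 True A2 = (u2, A2')" by fastforce
  show ?thesis unfolding tape_cells_def formula_cells_def tape_sweep_def 1 2
    by (simp only: sweep_append sweep_formula_clauses 1 2 sweep_formula_end prod.case append_assoc)
qed

section \<open>The controller\<close>

datatype query = Sat_Both | Sat1_Neg2 | Sat2_Neg1 | Neg_Both

instance query :: countable by countable_datatype

lemma UNIV_query: "(UNIV :: query set) = {Sat_Both, Sat1_Neg2, Sat2_Neg1, Neg_Both}"
  using query.exhaust by auto

instance query :: finite
  by standard (simp add: UNIV_query)

(* Find accumulates whether a conflict and whether a forcing clause was seen, followed by the
   flags negs_true, has_pos, has_open_pos, has_true_pos, has_open_neg of the current clause.
   Peek looks up the next bit of the first forcing literal (remembering the next bits of the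
   first open positive and negative literal of the current clause).  Narrow b keeps the match
   marks of the literals whose next bit is b, Commit marks the fully matched ones true.
   Select shift f q found v moves the selection mark in formula f one clause further (shift)
   or onto the first clause, v being the mark for the next clause. *)
datatype phase =
  Find query bool bool bool bool bool bool bool
| Peek query "bool option option" "bool option option" "bool option option"
| Narrow query bool
| Commit query
| Select bool bool query bool bool

instance phase :: countable by countable_datatype

instance phase :: finite
proof
  have "(UNIV :: phase set) \<subseteq>
     range (\<lambda>(q, a, b, c, d, e, f, g). Find q a b c d e f g) \<union>
     range (\<lambda>(q, a, b, c). Peek q a b c) \<union> range (\<lambda>(q, b). Narrow q b) \<union> range Commit \<union>
     range (\<lambda>(a, b, q, c, d). Select a b q c d)"
  proof
    fix x :: phase
    show "x \<in> range (\<lambda>(q, a, b, c, d, e, f, g). Find q a b c d e f g) \<union>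
     range (\<lambda>(q, a, b, c). Peek q a b c) \<union> range (\<lambda>(q, b). Narrow q b) \<union> range Commit \<union>
     range (\<lambda>(a, b, q, c, d). Select a b q c d)"
      by (cases x) (auto simp: image_iff split_paired_Ex)
  qed
  then show "finite (UNIV :: phase set)" by (rule finite_subset) simp
qed

fun asserts :: "query \<Rightarrow> bool \<Rightarrow> bool" where
  "asserts q False = (q = Sat_Both \<or> q = Sat1_Neg2)"
| "asserts q True = (q = Sat_Both \<or> q = Sat2_Neg1)"

fun negates :: "query \<Rightarrow> bool \<Rightarrow> bool" where
  "negates q False = (q = Sat2_Neg1 \<or> q = Neg_Both)"
| "negates q True = (q = Sat1_Neg2 \<or> q = Neg_Both)"

fun phase_bit_mode :: "phase \<Rightarrow> bit_mode" where
  "phase_bit_mode (Narrow q b) = Bits_Read"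
| "phase_bit_mode (Commit q) = Bits_Reset"
| "phase_bit_mode (Select a b q c d) = Bits_Reset"
| "phase_bit_mode u = Bits_Keep"

fun phase_lit :: "phase \<Rightarrow> bool \<Rightarrow> bool \<Rightarrow> bool option \<Rightarrow> bool \<Rightarrow> bool \<Rightarrow> phase \<times> bool \<times> bool" where
  "phase_lit (Find q cf fd an hp pn pt nn) r p fu t c =
     (Find q cf fd (an \<and> (p \<or> t)) (hp \<or> p) (pn \<or> (p \<and> \<not> t)) (pt \<or> (p \<and> t)) (nn \<or> (\<not> p \<and> \<not> t)), t, True)"
| "phase_lit (Peek q res pp pn) r p fu t c =
     (Peek q res (if p \<and> \<not> t \<and> pp = None then Some fu else pp)
         (if \<not> p \<and> \<not> t \<and> pn = None then Some fu else pn), t, c)"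
| "phase_lit (Narrow q b) r p fu t c = (Narrow q b, t, c \<and> fu = Some b)"
| "phase_lit (Commit q) r p fu t c = (Commit q, t \<or> (c \<and> fu = None), False)"
| "phase_lit (Select a b q d e) r p fu t c = (Select a b q d e, False, False)"

(* An asserted clause whose negative literals are all true forces its open positive literal to
   be true; so does a selected negated clause for the variables of its negative literals. *)
definition forcing_pol :: "query \<Rightarrow> bool \<Rightarrow> bool \<Rightarrow> bool \<Rightarrow> bool \<Rightarrow> bool \<Rightarrow> bool option" where
  "forcing_pol q r sel an pn nn =
    (if asserts q r \<and> an \<and> pn then Some True
     else if negates q r \<and> sel \<and> nn then Some False else None)"

fun phase_clause :: "phase \<Rightarrow> bool \<Rightarrow> bool \<Rightarrow> bool option \<Rightarrow> phase \<times> bool \<times> bool option" where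
  "phase_clause (Find q cf fd an hp pn pt nn) r sel s =
     (Find q (cf \<or> (asserts q r \<and> an \<and> \<not> hp) \<or> (negates q r \<and> sel \<and> pt))
         (fd \<or> forcing_pol q r sel an pn nn \<noteq> None)
        True False False False False, sel, forcing_pol q r sel an pn nn)"
| "phase_clause (Peek q res pp pn) r sel s =
     (Peek q (if res = None then (case s of None \<Rightarrow> None
              | Some pol \<Rightarrow> Some (case (if pol then pp else pn) of None \<Rightarrow> None | Some f \<Rightarrow> f))
            else res) None None, sel, s)"
| "phase_clause (Narrow q b) r sel s = (Narrow q b, sel, s)"
| "phase_clause (Commit q) r sel s = (Commit q, sel, None)"
| "phase_clause (Select isN rt q fd pv) r sel s =
     (if r = rt then (Select isN rt q (fd \<or> pv) (isN \<and> sel), pv, None)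
      else (Select isN rt q fd pv, sel, None))"

definition parse_start :: parse_state where "parse_start = (False, None)"

definition find_start :: "query \<Rightarrow> phase" where
  "find_start q = Find q False False True False False False False"

definition select_first :: "bool \<Rightarrow> query \<Rightarrow> (parse_state \<times> phase) outcome" where
  "select_first r q = Cont (parse_start, Select False r q False True)"
definition select_next :: "bool \<Rightarrow> query \<Rightarrow> (parse_state \<times> phase) outcome" where
  "select_next r q = Cont (parse_start, Select True r q False False)"

(* Control flow: Sat_Both; if it is satisfiable, Sat1_Neg2 for every clause of F2, rejecting
   on success; then Sat2_Neg1 for the clauses of F1 until one succeeds, and in that case
   Neg_Both for all pairs of clauses, rejecting on success. *)
fun after_query :: "query \<Rightarrow> bool \<Rightarrow> (parse_state \<times> phase) outcome" where
  "after_query Sat_Both sat = (if sat then select_first True Sat1_Neg2 else select_first False Sat2_Neg1)"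
| "after_query Sat1_Neg2 sat = (if sat then Rej else select_next True Sat1_Neg2)"
| "after_query Sat2_Neg1 sat = (if sat then select_first False Neg_Both else select_next False Sat2_Neg1)"
| "after_query Neg_Both sat = (if sat then Rej else select_next True Neg_Both)"

fun on_selected :: "bool \<Rightarrow> query \<Rightarrow> (parse_state \<times> phase) outcome" where
  "on_selected False Neg_Both = select_first True Neg_Both"
| "on_selected r q = Cont (parse_start, find_start q)"

fun on_exhausted :: "bool \<Rightarrow> query \<Rightarrow> (parse_state \<times> phase) outcome" where
  "on_exhausted True Sat1_Neg2 = select_first False Sat2_Neg1"
| "on_exhausted False Sat2_Neg1 = Acc"
| "on_exhausted False Neg_Both = Acc"
| "on_exhausted True Neg_Both = select_next False Neg_Both"
| "on_exhausted r q = Rej"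

fun phase_end :: "parse_state \<times> phase \<Rightarrow> (parse_state \<times> phase) outcome" where
  "phase_end (ps, Find q cf fd an hp pn pt nn)
      = (if cf then after_query q False else if fd then Cont (parse_start, Peek q None None None)
      else after_query q True)"
| "phase_end (ps, Peek q res pp pn) = (case res of Some (Some b)
    \<Rightarrow> Cont (parse_start, Narrow q b) | _ \<Rightarrow> Cont (parse_start, Commit q))"
| "phase_end (ps, Narrow q b) = Cont (parse_start, Peek q None None None)"
| "phase_end (ps, Commit q) = Cont (parse_start, find_start q)"
| "phase_end (ps, Select isN r q fd pv) = (if fd then on_selected r q else on_exhausted r q)"

definition ctrl_step :: "parse_state \<times> phase \<Rightarrow> cell \<Rightarrow> (parse_state \<times> phase) \<times> cell" where
  "ctrl_step = cell_step phase_bit_mode phase_lit phase_clause"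

definition ctrl_round :: "(parse_state \<times> phase) outcome \<times> cell list
    \<Rightarrow> (parse_state \<times> phase) outcome \<times> cell list" where
  "ctrl_round = sweep_round ctrl_step phase_end"

lemma ctrl_round_Cont: "ctrl_round (Cont (parse_start, u), tape_cells A1 A2) =
  (case tape_sweep phase_bit_mode phase_lit phase_clause u A1 A2 of (u', A1', A2')
      \<Rightarrow> (phase_end ((True, None), u'), tape_cells A1' A2'))"
  unfolding ctrl_round_def ctrl_step_def parse_start_def
  by (simp add: sweep_tape_cells split: prod.split)

definition negs_true :: "lit_info list \<Rightarrow> bool" where
  "negs_true ls = (\<forall>l\<in>set ls. \<not> lpos l \<longrightarrow> ltrue l)"
definition has_pos :: "lit_info list \<Rightarrow> bool" where
  "has_pos ls = (\<exists>l\<in>set ls. lpos l)"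
definition has_open_pos :: "lit_info list \<Rightarrow> bool" where
  "has_open_pos ls = (\<exists>l\<in>set ls. lpos l \<and> \<not> ltrue l)"
definition has_true_pos :: "lit_info list \<Rightarrow> bool" where
  "has_true_pos ls = (\<exists>l\<in>set ls. lpos l \<and> ltrue l)"
definition has_open_neg :: "lit_info list \<Rightarrow> bool" where
  "has_open_neg ls = (\<exists>l\<in>set ls. \<not> lpos l \<and> \<not> ltrue l)"

lemma lits_sweep_Find:
  "lits_sweep phase_bit_mode phase_lit (Find q cf fd an hp pn pt nn) r ls =
   (Find q cf fd (an \<and> negs_true ls) (hp \<or> has_pos ls) (pn \<or> has_open_pos ls) (pt \<or> has_true_pos ls)
       (nn \<or> has_open_neg ls), map (\<lambda>l. l\<lparr>lmatch := True\<rparr>) ls)"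
  by (induction ls arbitrary: an hp pn pt nn)
     (auto simp: negs_true_def has_pos_def has_open_pos_def has_true_pos_def
         has_open_neg_def advance_read_def)

definition conflict :: "query \<Rightarrow> bool \<Rightarrow> clause_info \<Rightarrow> bool" where
  "conflict q r c = ((asserts q r \<and> negs_true (lits c) \<and> \<not> has_pos (lits c))
      \<or> (negates q r \<and> selected c \<and> has_true_pos (lits c)))"
definition clause_forcing :: "query \<Rightarrow> bool \<Rightarrow> clause_info \<Rightarrow> bool option" where
  "clause_forcing q r c = forcing_pol q r (selected c) (negs_true (lits c)) (has_open_pos (lits c))
      (has_open_neg (lits c))"
definition find_marked :: "query \<Rightarrow> bool \<Rightarrow> clause_info \<Rightarrow> clause_info" where
  "find_marked q r c = c\<lparr>lits := map (\<lambda>l. l\<lparr>lmatch := True\<rparr>) (lits c), forcing := clause_forcing q r c\<rparr>"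

definition has_conflict :: "query \<Rightarrow> clause_info list \<Rightarrow> clause_info list \<Rightarrow> bool" where
  "has_conflict q A1 A2 = ((\<exists>c\<in>set A1. conflict q False c) \<or> (\<exists>c\<in>set A2. conflict q True c))"

definition has_forcing :: "query \<Rightarrow> clause_info list \<Rightarrow> clause_info list \<Rightarrow> bool" where
  "has_forcing q A1 A2 =
    ((\<exists>c\<in>set A1. clause_forcing q False c \<noteq> None) \<or> (\<exists>c\<in>set A2. clause_forcing q True c \<noteq> None))"

lemma formula_sweep_Find:
  "formula_sweep phase_bit_mode phase_lit phase_clause (Find q cf fd True False False False False) r A =
   (Find q (cf \<or> (\<exists>c\<in>set A. conflict q r c)) (fd \<or> (\<exists>c\<in>set A. clause_forcing q r c \<noteq> None)) True
       False False False False,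
    map (find_marked q r) A)"
  by (induction A arbitrary: cf fd)
     (auto simp: clause_sweep_def lits_end_sweep_def lits_sweep_Find conflict_def
         clause_forcing_def find_marked_def)

lemma tape_sweep_Find:
  "tape_sweep phase_bit_mode phase_lit phase_clause (find_start q) A1 A2 =
   (Find q (has_conflict q A1 A2) (has_forcing q A1 A2) True False False False False,
    map (find_marked q False) A1, map (find_marked q True) A2)"
  by (simp add: tape_sweep_def find_start_def formula_sweep_Find has_conflict_def has_forcing_def)

definition first_open_bit :: "bool \<Rightarrow> lit_info list \<Rightarrow> bool option option" where
  "first_open_bit pol ls = map_option next_bit (find (\<lambda>l. lpos l = pol \<and> \<not> ltrue l) ls)"

lemma lits_sweep_Peek:
  "lits_sweep phase_bit_mode phase_lit (Peek q res pp pn) r ls =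
   (Peek q res (if pp = None then first_open_bit True ls else pp)
       (if pn = None then first_open_bit False ls else pn), ls)"
  by (induction ls arbitrary: pp pn) (auto simp: first_open_bit_def advance_read_def)

fun peek_bit :: "clause_info list \<Rightarrow> bool option option" where
  "peek_bit [] = None"
| "peek_bit (c # A) = (case forcing c of None \<Rightarrow> peek_bit A | Some pol
    \<Rightarrow> Some (case first_open_bit pol (lits c) of None \<Rightarrow> None | Some f \<Rightarrow> f))"

lemma formula_sweep_Peek:
  "formula_sweep phase_bit_mode phase_lit phase_clause (Peek q res None None) r A
      = (Peek q (if res = None then peek_bit A else res) None None, A)"
  by (induction A arbitrary: res) (auto simp: clause_sweep_def lits_end_sweep_def lits_sweep_Peek
      split: option.split)

lemma peek_bit_append: "peek_bit (A1 @ A2) = (if peek_bit A1 = None then peek_bit A2 else peek_bit A1)"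
  by (induction A1) (auto split: option.split)

lemma tape_sweep_Peek:
  "tape_sweep phase_bit_mode phase_lit phase_clause (Peek q None None None) A1 A2
      = (Peek q (peek_bit (A1 @ A2)) None None, A1, A2)"
  by (simp add: tape_sweep_def formula_sweep_Peek peek_bit_append)

definition narrow_lit :: "bool \<Rightarrow> lit_info \<Rightarrow> lit_info" where
  "narrow_lit b l = l\<lparr>lread := advance_read Bits_Read l, lmatch := lmatch l \<and> next_bit l = Some b\<rparr>"
definition narrow_clause :: "bool \<Rightarrow> clause_info \<Rightarrow> clause_info" where
  "narrow_clause b c = c\<lparr>lits := map (narrow_lit b) (lits c)\<rparr>"

lemma tape_sweep_Narrow:
  "tape_sweep phase_bit_mode phase_lit phase_clause (Narrow q b) A1 A2
      = (Narrow q b, map (narrow_clause b) A1, map (narrow_clause b) A2)"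
proof -
  have L: "lits_sweep phase_bit_mode phase_lit (Narrow q b) r ls
      = (Narrow q b, map (narrow_lit b) ls)" for r ls
    by (induction ls) (auto simp: narrow_lit_def)
  have F: "formula_sweep phase_bit_mode phase_lit phase_clause (Narrow q b) r A
      = (Narrow q b, map (narrow_clause b) A)" for r A
    by (induction A) (auto simp: clause_sweep_def lits_end_sweep_def L narrow_clause_def)
  show ?thesis by (simp add: tape_sweep_def F)
qed

definition commit_lit :: "lit_info \<Rightarrow> lit_info" where
  "commit_lit l = l\<lparr>lread := 0, ltrue := ltrue l \<or> (lmatch l \<and> next_bit l = None), lmatch := False\<rparr>"
definition commit_clause :: "clause_info \<Rightarrow> clause_info" where
  "commit_clause c = c\<lparr>lits := map commit_lit (lits c), forcing := None\<rparr>"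

lemma tape_sweep_Commit:
  "tape_sweep phase_bit_mode phase_lit phase_clause (Commit q) A1 A2
      = (Commit q, map commit_clause A1, map commit_clause A2)"
proof -
  have L: "lits_sweep phase_bit_mode phase_lit (Commit q) r ls = (Commit q, map commit_lit ls)" for r ls
    by (induction ls) (auto simp: commit_lit_def advance_read_def)
  have F: "formula_sweep phase_bit_mode phase_lit phase_clause (Commit q) r A
      = (Commit q, map commit_clause A)" for r A
    by (induction A) (auto simp: clause_sweep_def lits_end_sweep_def L commit_clause_def)
  show ?thesis by (simp add: tape_sweep_def F)
qed

definition reset_lit :: "lit_info \<Rightarrow> lit_info" where
  "reset_lit l = l\<lparr>lread := 0, ltrue := False, lmatch := False\<rparr>"
definition reset_clause :: "clause_info \<Rightarrow> clause_info" where
  "reset_clause c = c\<lparr>lits := map reset_lit (lits c), forcing := None\<rparr>"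

fun sel_shift :: "bool \<Rightarrow> bool \<Rightarrow> bool list \<Rightarrow> bool list" where
  "sel_shift isN pv [] = []"
| "sel_shift isN pv (s # ss) = pv # sel_shift isN (isN \<and> s) ss"

fun set_selected :: "clause_info list \<Rightarrow> bool list \<Rightarrow> clause_info list" where
  "set_selected (c # A) (s # ss) = c\<lparr>selected := s\<rparr> # set_selected A ss"
| "set_selected A ss = A"

lemma tape_sweep_Select:
  "\<exists>pv'. tape_sweep phase_bit_mode phase_lit phase_clause (Select isN rt q fd pv) A1 A2 =
    (Select isN rt q (fd \<or> True \<in> set (sel_shift isN pv (map selected (if rt then A2 else A1)))) pv',
     if rt then map reset_clause A1 else set_selected (map reset_clause A1)
         (sel_shift isN pv (map selected A1)),
     if rt then set_selected (map reset_clause A2) (sel_shift isN pv (map selected A2)) else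
         map reset_clause A2)"
proof -
  have L: "lits_sweep phase_bit_mode phase_lit (Select isN rt q fd pv) r ls
      = (Select isN rt q fd pv, map reset_lit ls)" for r ls fd pv
    by (induction ls) (auto simp: reset_lit_def advance_read_def)
  have F1: "r \<noteq> rt \<Longrightarrow> formula_sweep phase_bit_mode phase_lit phase_clause (Select isN rt q fd pv) r A
      = (Select isN rt q fd pv, map reset_clause A)" for r A fd pv
    by (induction A) (auto simp: clause_sweep_def lits_end_sweep_def L reset_clause_def)
  have F2: "\<exists>pv'. formula_sweep phase_bit_mode phase_lit phase_clause (Select isN rt q fd pv) rt A
      = (Select isN rt q (fd \<or> True \<in> set (sel_shift isN pv (map selected A))) pv',
      set_selected (map reset_clause A) (sel_shift isN pv (map selected A)))" for A fd pv
  proof (induction A arbitrary: fd pv)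
    case Nil then show ?case by simp
  next
    case (Cons c A)
    obtain pv' where IH: "formula_sweep phase_bit_mode phase_lit phase_clause
        (Select isN rt q (fd \<or> pv) (isN \<and> selected c)) rt A =
      (Select isN rt q ((fd \<or> pv) \<or> True \<in> set (sel_shift isN (isN \<and> selected c) (map selected A))) pv',
       set_selected (map reset_clause A) (sel_shift isN (isN \<and> selected c) (map selected A)))"
           using Cons.IH by blast
    have cc: "c\<lparr>lits := map reset_lit (lits c), selected := pv, forcing := None\<rparr>
        = (reset_clause c)\<lparr>selected := pv\<rparr>"
      by (simp add: reset_clause_def)
    show ?case using IH by (simp add: clause_sweep_def lits_end_sweep_def L cc)
  qed
  show ?thesis
  proof (cases rt)
    case True
    then show ?thesis using F2[where A=A2 and fd=fd and pv=pv]
        F1[where r=False and A=A1 and fd=fd and pv=pv] by (auto simp: tape_sweep_def)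
  next
    case False
    then obtain pv' where "formula_sweep phase_bit_mode phase_lit phase_clause
        (Select isN rt q fd pv) False A1 = (Select isN rt q
        (fd \<or> True \<in> set (sel_shift isN pv (map selected A1))) pv',
      set_selected (map reset_clause A1) (sel_shift isN pv (map selected A1)))" using
          F2[where A=A1 and fd=fd and pv=pv] by auto
    then show ?thesis using False F1[where r=True and A=A2 and pv=pv'] by (auto simp: tape_sweep_def)
  qed
qed

section \<open>Unit propagation\<close>

definition all_lits :: "clause_info list \<Rightarrow> lit_info list" where
  "all_lits A = concat (map lits A)"

definition skeleton :: "clause_info \<Rightarrow> clause \<times> bool" where
  "skeleton c = (map (\<lambda>l. (lvar l, lpos l)) (lits c), selected c)"

fun clause_constraint :: "query \<Rightarrow> bool \<Rightarrow> model \<Rightarrow> clause \<times> bool \<Rightarrow> bool" where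
  "clause_constraint q r I (cl, s) = ((asserts q r \<longrightarrow> (\<exists>(v, p)\<in>set cl. I v = p))
      \<and> (negates q r \<and> s \<longrightarrow> (\<forall>(v, p)\<in>set cl. I v \<noteq> p)))"

definition query_model :: "query \<Rightarrow> (clause \<times> bool) list \<Rightarrow> (clause \<times> bool) list \<Rightarrow> model \<Rightarrow> bool" where
  "query_model q K1 K2 I = ((\<forall>k\<in>set K1. clause_constraint q False I k)
      \<and> (\<forall>k\<in>set K2. clause_constraint q True I k))"

definition query_sat :: "query \<Rightarrow> (clause \<times> bool) list \<Rightarrow> (clause \<times> bool) list \<Rightarrow> bool" where
  "query_sat q K1 K2 = (\<exists>I. query_model q K1 K2 I)"

definition horn_skeleton :: "(clause \<times> bool) list \<Rightarrow> bool" where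
  "horn_skeleton K = (\<forall>k\<in>set K. horn_clause (fst k))"

definition prop_inv :: "query \<Rightarrow> nat set \<Rightarrow> clause_info list \<Rightarrow> clause_info list \<Rightarrow> bool" where
  "prop_inv q M A1 A2 = ((\<forall>l\<in>set (all_lits A1 @ all_lits A2). (ltrue l \<longleftrightarrow> lvar l \<in> M) \<and> lread l = 0) \<and>
     (\<forall>v\<in>M. \<forall>I. query_model q (map skeleton A1) (map skeleton A2) I \<longrightarrow> I v) \<and>
     M \<subseteq> lvar ` set (all_lits A1 @ all_lits A2) \<and> horn_skeleton (map skeleton A1)
         \<and> horn_skeleton (map skeleton A2))"

fun forcing_lit :: "clause_info list \<Rightarrow> lit_info option" where
  "forcing_lit [] = None"
| "forcing_lit (c # A) = (case forcing c of None \<Rightarrow> forcing_lit A | Some pol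
    \<Rightarrow> find (\<lambda>l. lpos l = pol \<and> \<not> ltrue l) (lits c))"

lemma peek_bit_forcing_lit: "forcing_lit A = Some l \<Longrightarrow> peek_bit A = Some (next_bit l)"
  by (induction A) (auto simp: first_open_bit_def split: option.splits)

lemma skeleton_find_marked[simp]: "skeleton (find_marked q r c) = skeleton c"
  by (simp add: skeleton_def find_marked_def comp_def)

lemma clause_constraint_skeleton:
  "clause_constraint q r I (skeleton c) = ((asserts q r \<longrightarrow> (\<exists>l\<in>set (lits c). I (lvar l) = lpos l)) \<and>
     (negates q r \<and> selected c \<longrightarrow> (\<forall>l\<in>set (lits c). I (lvar l) \<noteq> lpos l)))"
  by (auto simp: skeleton_def)

lemma conflict_unsat:
  assumes marks: "\<forall>l\<in>set (lits c). ltrue l \<longleftrightarrow> lvar l \<in> M" and forced: "\<forall>v\<in>M. I v"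
    and sm: "clause_constraint q r I (skeleton c)" and cf: "conflict q r c"
  shows False
proof -
  have sm': "asserts q r \<longrightarrow> (\<exists>l\<in>set (lits c). I (lvar l) = lpos l)"
    "negates q r \<and> selected c \<longrightarrow> (\<forall>l\<in>set (lits c). I (lvar l) \<noteq> lpos l)" using sm
        by (auto simp: clause_constraint_skeleton)
  show False
  proof (cases "asserts q r \<and> negs_true (lits c) \<and> \<not> has_pos (lits c)")
    case True
    then obtain l where l: "l \<in> set (lits c)" "I (lvar l) = lpos l" using sm' by blast
    then have "\<not> lpos l" using True by (auto simp: has_pos_def)
    then have "ltrue l" using True l by (auto simp: negs_true_def)
    then show False using l marks forced \<open>\<not> lpos l\<close> by auto
  next
    case False
    then have "negates q r \<and> selected c \<and> has_true_pos (lits c)" using cf by (auto simp: conflict_def)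
    then obtain l where l: "l \<in> set (lits c)" "lpos l" "ltrue l" by (auto simp: has_true_pos_def)
    then show False using sm' marks forced \<open>negates q r \<and> selected c \<and> has_true_pos (lits c)\<close> by auto
  qed
qed

lemma no_forcing_sat:
  assumes marks: "\<forall>l\<in>set (lits c). ltrue l \<longleftrightarrow> lvar l \<in> M"
    and cf: "\<not> conflict q r c" and sm: "clause_forcing q r c = None"
  shows "clause_constraint q r (\<lambda>v. v \<in> M) (skeleton c)"
proof -
  have A: "asserts q r \<longrightarrow> (\<exists>l\<in>set (lits c). (lvar l \<in> M) = lpos l)"
  proof
    assume a: "asserts q r"
    show "\<exists>l\<in>set (lits c). (lvar l \<in> M) = lpos l"
    proof (cases "negs_true (lits c)")
      case False
      then obtain l where "l \<in> set (lits c)" "\<not> lpos l" "\<not> ltrue l" by (auto simp: negs_true_def)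
      then show ?thesis using marks by auto
    next
      case True
      then have "has_pos (lits c)" using cf a by (auto simp: conflict_def)
      then obtain l where l: "l \<in> set (lits c)" "lpos l" by (auto simp: has_pos_def)
      have "\<not> has_open_pos (lits c)" using sm a True
          by (auto simp: clause_forcing_def forcing_pol_def split: if_splits)
      then have "ltrue l" using l by (auto simp: has_open_pos_def)
      then show ?thesis using l marks by auto
    qed
  qed
  have B: "negates q r \<and> selected c \<longrightarrow> (\<forall>l\<in>set (lits c). (lvar l \<in> M) \<noteq> lpos l)"
  proof (intro impI ballI)
    fix l assume u: "negates q r \<and> selected c" and l: "l \<in> set (lits c)"
    have "\<not> has_true_pos (lits c)" using cf u by (auto simp: conflict_def)
    moreover have "\<not> has_open_neg (lits c)" using sm u
        by (auto simp: clause_forcing_def forcing_pol_def split: if_splits)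
    ultimately show "(lvar l \<in> M) \<noteq> lpos l" using l marks by (cases "lpos l")
        (auto simp: has_true_pos_def has_open_neg_def)
  qed
  show ?thesis using A B by (simp add: clause_constraint_skeleton)
qed

lemma horn_clause_pos_unique:
  assumes "horn_clause cl" "(v, True) \<in> set cl" "(w, True) \<in> set cl"
  shows "v = w"
proof -
  have sub: "{v. (v, True) \<in> set cl} \<subseteq> fst ` set cl" by force
  have fin: "finite {v. (v, True) \<in> set cl}" by (rule finite_subset[OF sub]) simp
  have "card {v. (v, True) \<in> set cl} \<le> Suc 0" using assms(1) by (simp add: horn_clause_def)
  then have "\<forall>a1\<in>{v. (v, True) \<in> set cl}. \<forall>a2\<in>{v. (v, True) \<in> set cl}. a1 = a2"
    using card_le_Suc0_iff_eq[OF fin] by blast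
  then show ?thesis using assms(2,3) by blast
qed

lemma forcing_lit_forced:
  assumes marks: "\<forall>l\<in>set (lits c). ltrue l \<longleftrightarrow> lvar l \<in> M" and forced: "\<forall>v\<in>M. I v"
    and sm: "clause_constraint q r I (skeleton c)" and hc: "horn_clause (fst (skeleton c))"
    and s: "clause_forcing q r c = Some pol" and l: "l \<in> set (lits c)" "lpos l = pol" "\<not> ltrue l"
  shows "I (lvar l)"
proof (cases pol)
  case True
  then have a: "asserts q r" "negs_true (lits c)" using s
      by (auto simp: clause_forcing_def forcing_pol_def split: if_splits)
  then obtain l' where l': "l' \<in> set (lits c)" "I (lvar l')
      = lpos l'" using sm by (auto simp: clause_constraint_skeleton)
  have "lpos l'"
  proof (rule ccontr)
    assume "\<not> lpos l'"
    then have "ltrue l'" using a(2) l'(1) by (auto simp: negs_true_def)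
    then have "I (lvar l')" using marks forced l'(1) by auto
    then show False using l'(2) \<open>\<not> lpos l'\<close> by simp
  qed
  have "(lvar l', True) \<in> set (fst (skeleton c))" "(lvar l, True) \<in> set (fst (skeleton c))"
    using l' \<open>lpos l'\<close> l True by (auto simp: skeleton_def image_iff intro: bexI[of _ l'] bexI[of _ l])
  then have "lvar l' = lvar l" using horn_clause_pos_unique[OF hc] by blast
  then show ?thesis using l' \<open>lpos l'\<close> by simp
next
  case False
  then have "negates q r" "selected c" using s
      by (auto simp: clause_forcing_def forcing_pol_def split: if_splits)
  then show ?thesis using sm l False by (auto simp: clause_constraint_skeleton)
qed

lemma clause_forcing_lit:
  assumes "clause_forcing q r c = Some pol"
  shows "\<exists>l\<in>set (lits c). lpos l = pol \<and> \<not> ltrue l"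
  using assms by (auto simp: clause_forcing_def forcing_pol_def has_open_pos_def
      has_open_neg_def split: if_splits)

lemma inj_bits: "bits a = bits b \<Longrightarrow> a = b"
proof (induction a arbitrary: b rule: bits.induct)
  case (1 a)
  show ?case
  proof (cases "a = 0")
    case True
    then show ?thesis using 1(2) by (subst (asm) (1 2) bits.simps) (auto split: if_splits)
  next
    case False
    then have b0: "b \<noteq> 0" using 1(2) by (subst (asm) (1 2) bits.simps) (auto split: if_splits)
    have e: "(if even a then 1 else 2 :: nat)
        = (if even b then 1 else 2)" and r: "bits (a div 2) = bits (b div 2)"
      using 1(2) False b0 by (subst (asm) (1 2) bits.simps; simp)+
    have "a div 2 = b div 2" using 1(1)[OF False r] .
    moreover have "even a = even b" using e by (auto split: if_splits)
    ultimately show ?thesis by (metis div_mult_mod_eq even_iff_mod_2_eq_zero odd_iff_mod_2_eq_one)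
  qed
qed

lemma bits_elem: "x \<in> set (bits n) \<Longrightarrow> x = 1 \<or> x = 2"
  using set_bits by blast

definition map_lits :: "(lit_info \<Rightarrow> lit_info) \<Rightarrow> clause_info list \<Rightarrow> clause_info list" where
  "map_lits f A = map (\<lambda>c. c\<lparr>lits := map f (lits c)\<rparr>) A"

definition bits_prefix :: "nat \<Rightarrow> nat \<Rightarrow> lit_info \<Rightarrow> bool" where
  "bits_prefix vs k l = (k \<le> length (bits (lvar l)) \<and> take k (bits (lvar l)) = take k (bits vs))"

(* The marks of a literal after the first k bits of its name have been compared with those of vs. *)
definition compare_lit :: "nat \<Rightarrow> nat \<Rightarrow> lit_info \<Rightarrow> lit_info" where
  "compare_lit vs k l = l\<lparr>lread := min k (length (bits (lvar l))), lmatch := bits_prefix vs k l\<rparr>"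

lemma forcing_lit_map_lits:
  assumes "\<forall>l. lpos (f l) = lpos l \<and> ltrue (f l) = ltrue l"
  shows "forcing_lit (map_lits f A) = map_option f (forcing_lit A)"
proof (induction A)
  case (Cons c A)
  have "find (\<lambda>l. lpos l = pol \<and> \<not> ltrue l) (map f ls)
      = map_option f (find (\<lambda>l. lpos l = pol \<and> \<not> ltrue l) ls)" for pol ls
    using assms by (induction ls) auto
  then show ?case using Cons by (auto simp: map_lits_def split: option.split)
qed (simp add: map_lits_def)

lemma next_bit_compare_lit: "next_bit (compare_lit vs k l)
    = (if k < length (bits (lvar l)) then Some (bits (lvar l) ! k = 2) else None)"
  by (auto simp: next_bit_def compare_lit_def min_def)

lemma bits_prefix_Suc:
  assumes k: "k < length (bits vs)"
  shows "bits_prefix vs (Suc k) l = (bits_prefix vs k l \<and> next_bit (compare_lit vs k l)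
      = Some (bits vs ! k = 2))"
proof -
  let ?a = "bits (lvar l)" and ?b = "bits vs"
  have "bits_prefix vs (Suc k) l = (Suc k \<le> length ?a \<and> take (Suc k) ?a = take (Suc k) ?b)"
      by (simp add: bits_prefix_def)
  also have "\<dots> = (k < length ?a \<and> take k ?a = take k ?b \<and> ?a ! k = ?b ! k)"
    using k by (auto simp: take_Suc_conv_app_nth)
  also have "\<dots> = (k < length ?a \<and> take k ?a = take k ?b \<and> (?a ! k = 2) = (?b ! k = 2))"
    using k bits_elem[OF nth_mem[OF k]] by (auto dest: bits_elem[OF nth_mem])
  finally show ?thesis by (auto simp: bits_prefix_def next_bit_compare_lit)
qed

lemma narrow_compare_lit:
  assumes k: "k < length (bits vs)"
  shows "map (narrow_clause (bits vs ! k = 2)) (map_lits (compare_lit vs k) A)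
      = map_lits (compare_lit vs (Suc k)) A"
proof -
  have "narrow_lit (bits vs ! k = 2) (compare_lit vs k l) = compare_lit vs (Suc k) l" for l
    using bits_prefix_Suc[OF k, of l] by (auto simp: narrow_lit_def compare_lit_def
        advance_read_def min_def)
  then show ?thesis by (simp add: map_lits_def narrow_clause_def comp_def)
qed

lemma commit_compare_lit:
  "commit_lit (compare_lit vs (length (bits vs)) l) = l\<lparr>lread := 0, ltrue := ltrue l \<or> lvar l
      = vs, lmatch := False\<rparr>"
proof -
  have "(bits_prefix vs (length (bits vs)) l \<and> \<not> length (bits vs) < length
      (bits (lvar l))) = (lvar l = vs)"
  proof
    assume a: "bits_prefix vs (length (bits vs)) l \<and> \<not> length (bits vs) < length (bits (lvar l))"
    then have "length (bits (lvar l)) = length (bits vs)" by (auto simp: bits_prefix_def)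
    then have "bits (lvar l) = bits vs" using a by (auto simp: bits_prefix_def)
    then show "lvar l = vs" by (rule inj_bits)
  qed (auto simp: bits_prefix_def)
  moreover have "commit_lit (compare_lit vs (length (bits vs)) l) = l\<lparr>lread := 0, ltrue := ltrue l
      \<or> (bits_prefix vs (length (bits vs)) l \<and>
      \<not> length (bits vs) < length (bits (lvar l))), lmatch := False\<rparr>"
    unfolding commit_lit_def next_bit_compare_lit by (simp add: compare_lit_def)
  ultimately show ?thesis by simp
qed

lemma compare_lit_0: "lread l = 0 \<Longrightarrow> lmatch l \<Longrightarrow> compare_lit vs 0 l = l"
  by (simp add: compare_lit_def bits_prefix_def)

lemma ctrl_round_Peek: "ctrl_round (Cont (parse_start, Peek q None None None), tape_cells A1 A2) =
  ((case peek_bit (A1 @ A2) of Some (Some b) \<Rightarrow> Cont (parse_start, Narrow q b) | _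
      \<Rightarrow> Cont (parse_start, Commit q)), tape_cells A1 A2)"
  by (simp add: ctrl_round_Cont tape_sweep_Peek)

lemma ctrl_round_Narrow: "ctrl_round (Cont (parse_start, Narrow q b), tape_cells A1 A2)
    = (Cont (parse_start, Peek q None None None),
    tape_cells (map (narrow_clause b) A1) (map (narrow_clause b) A2))"
  by (simp add: ctrl_round_Cont tape_sweep_Narrow)

lemma ctrl_round_Commit: "ctrl_round (Cont (parse_start, Commit q), tape_cells A1 A2)
    = (Cont (parse_start, find_start q), tape_cells (map commit_clause A1) (map commit_clause A2))"
  by (simp add: ctrl_round_Cont tape_sweep_Commit)

lemma funpow_Suc_apply: "(f ^^ Suc n) x = (f ^^ n) (f x)"
  by (simp only: funpow_Suc_right comp_def)

lemma compare_lit_sel [simp]: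
  "lvar (compare_lit v k l) = lvar l" "lpos (compare_lit v k l) = lpos l"
  "ltrue (compare_lit v k l) = ltrue l"
  by (simp_all add: compare_lit_def)

lemma peek_bit_compare:
  assumes "forcing_lit (T1 @ T2) = Some l"
  shows "peek_bit (map_lits (compare_lit v k) T1 @ map_lits (compare_lit v k) T2) =
    Some (next_bit (compare_lit v k l))"
proof -
  have "forcing_lit (map_lits (compare_lit v k) (T1 @ T2)) = Some (compare_lit v k l)"
    using forcing_lit_map_lits[of "compare_lit v k" "T1 @ T2"] assms by simp
  then show ?thesis using peek_bit_forcing_lit by (simp add: map_lits_def)
qed

lemma compare_rounds:
  assumes src: "forcing_lit (T1 @ T2) = Some l"
  shows "k \<le> length (bits (lvar l)) \<Longrightarrow> (ctrl_round ^^ (2 * (length (bits (lvar l)) - k) + 2))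
      (Cont (parse_start, Peek q None None None),
       tape_cells (map_lits (compare_lit (lvar l) k) T1) (map_lits (compare_lit (lvar l) k) T2)) =
    (Cont (parse_start, find_start q),
     tape_cells (map commit_clause (map_lits (compare_lit (lvar l) (length (bits (lvar l)))) T1))
       (map commit_clause (map_lits (compare_lit (lvar l) (length (bits (lvar l)))) T2)))"
proof (induction "length (bits (lvar l)) - k" arbitrary: k)
  case 0
  then have "k = length (bits (lvar l))" by simp
  then show ?case using peek_bit_compare[OF src, of "lvar l" k]
    by (simp add: next_bit_compare_lit ctrl_round_Peek ctrl_round_Commit funpow_Suc_apply
        del: funpow.simps)
next
  case (Suc m)
  then have k: "k < length (bits (lvar l))" by simp
  have "2 * (length (bits (lvar l)) - k) + 2 = Suc (Suc (2 * (length (bits (lvar l)) - Suc k) + 2))"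
    using k by simp
  then show ?case using Suc.hyps peek_bit_compare[OF src, of "lvar l" k] k
    by (simp only: funpow_Suc_apply)
      (simp add: next_bit_compare_lit ctrl_round_Peek ctrl_round_Narrow narrow_compare_lit[OF k])
qed

definition mark_true :: "nat \<Rightarrow> clause_info list \<Rightarrow> clause_info list" where
  "mark_true v A = map (\<lambda>c. c\<lparr>lits := map (\<lambda>l. l\<lparr>lread := 0, ltrue := ltrue l \<or> lvar l = v,
     lmatch := False\<rparr>) (lits c), forcing := None\<rparr>) A"

lemma skeleton_mark_true [simp]: "map skeleton (mark_true v A) = map skeleton A"
  by (simp add: mark_true_def skeleton_def comp_def)

lemma all_lits_mark_true:
  "all_lits (mark_true v A) =
    map (\<lambda>l. l\<lparr>lread := 0, ltrue := ltrue l \<or> lvar l = v, lmatch := False\<rparr>) (all_lits A)"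
  by (induction A) (auto simp: all_lits_def mark_true_def)

lemma commit_compare_find_marked:
  "map commit_clause (map_lits (compare_lit v (length (bits v)))
      (map (find_marked q r) A)) = mark_true v A"
  using commit_compare_lit[of v]
  by (simp add: mark_true_def map_lits_def find_marked_def commit_clause_def comp_def)

lemma find_marked_unread:
  "\<forall>l\<in>set (all_lits A). lread l = 0 \<Longrightarrow>
    map_lits (compare_lit v 0) (map (find_marked q r) A) = map (find_marked q r) A"
  by (auto simp: map_lits_def find_marked_def compare_lit_0 all_lits_def intro!: map_idI)

definition tape_vars :: "clause_info list \<Rightarrow> clause_info list \<Rightarrow> nat set" where
  "tape_vars A1 A2 = lvar ` set (all_lits A1 @ all_lits A2)"

lemma lvar_image_skeleton: "lvar ` set (all_lits A) = fst ` set (concat (map fst (map skeleton A)))"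
  by (force simp: all_lits_def skeleton_def image_iff)

lemma tape_vars_skeleton:
  "map skeleton B1 = map skeleton A1 \<Longrightarrow> map skeleton B2 = map skeleton A2 \<Longrightarrow>
    tape_vars B1 B2 = tape_vars A1 A2"
  unfolding tape_vars_def by (simp only: set_append image_Un lvar_image_skeleton)

lemma finite_tape_vars: "finite (tape_vars A1 A2)"
  by (simp add: tape_vars_def)

lemma ctrl_round_Find: "ctrl_round (Cont (parse_start, find_start q), tape_cells A1 A2) =
  (if has_conflict q A1 A2 then after_query q False
   else if has_forcing q A1 A2 then Cont (parse_start, Peek q None None None) else after_query q True,
   tape_cells (map (find_marked q False) A1) (map (find_marked q True) A2))"
  by (simp add: ctrl_round_Cont tape_sweep_Find)

lemma forcing_lit_exists:
  assumes "\<forall>c\<in>set A. \<forall>pol. forcing c = Some pol \<longrightarrow> (\<exists>l\<in>set (lits c). lpos l = pol \<and> \<not> ltrue l)"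
    and "\<exists>c\<in>set A. forcing c \<noteq> None"
  shows "\<exists>c\<in>set A. \<exists>l\<in>set (lits c). forcing_lit A = Some l \<and> forcing c = Some (lpos l) \<and> \<not> ltrue l"
  using assms
proof (induction A)
  case (Cons c A)
  show ?case
  proof (cases "forcing c")
    case None
    then show ?thesis using Cons by auto
  next
    case (Some pol)
    then obtain l where "l \<in> set (lits c)" "lpos l = pol" "\<not> ltrue l" using Cons.prems(1) by auto
    then have "find (\<lambda>l. lpos l = pol \<and> \<not> ltrue l) (lits c) \<noteq> None"
      unfolding find_None_iff by blast
    then obtain l' where "find (\<lambda>l. lpos l = pol \<and> \<not> ltrue l) (lits c) = Some l'" by blast
    then show ?thesis using Some by (auto simp: find_Some_iff)
  qed
qed simp

lemma query_model_forced:
  "query_model q (map skeleton A1) (map skeleton A2) I \<Longrightarrow> prop_inv q M A1 A2 \<Longrightarrow> \<forall>v\<in>M. I v"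
  by (auto simp: prop_inv_def)

lemma prop_inv_ltrue:
  "prop_inv q M A1 A2 \<Longrightarrow> c \<in> set A1 \<or> c \<in> set A2 \<Longrightarrow> \<forall>l\<in>set (lits c). ltrue l \<longleftrightarrow> lvar l \<in> M"
  by (auto simp: prop_inv_def all_lits_def)

lemma find_conflict_unsat:
  assumes pi: "prop_inv q M A1 A2" and "has_conflict q A1 A2"
  shows "\<not> query_sat q (map skeleton A1) (map skeleton A2)"
proof
  assume "query_sat q (map skeleton A1) (map skeleton A2)"
  then obtain I where I: "query_model q (map skeleton A1) (map skeleton A2) I"
      by (auto simp: query_sat_def)
  from \<open>has_conflict q A1 A2\<close> obtain r c where c: "c \<in> set (if r then A2 else A1)" "conflict q r c"
    unfolding has_conflict_def by (metis (full_types))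
  have "clause_constraint q r I (skeleton c)" using I c by (cases r) (auto simp: query_model_def)
  then show False
    using conflict_unsat[OF prop_inv_ltrue[OF pi] query_model_forced[OF I pi] _ c(2)] c
    by (cases r) auto
qed

lemma find_quiescent_sat:
  assumes pi: "prop_inv q M A1 A2" and "\<not> has_conflict q A1 A2" and "\<not> has_forcing q A1 A2"
  shows "query_sat q (map skeleton A1) (map skeleton A2)"
proof -
  have "query_model q (map skeleton A1) (map skeleton A2) (\<lambda>v. v \<in> M)"
    using assms no_forcing_sat[OF prop_inv_ltrue[OF pi]]
    unfolding query_model_def has_conflict_def has_forcing_def by auto
  then show ?thesis by (auto simp: query_sat_def)
qed

lemma forced_var_exists:
  assumes pi: "prop_inv q M A1 A2" and fd: "has_forcing q A1 A2"
  obtains l where "forcing_lit (map (find_marked q False) A1 @ map (find_marked q True) A2) = Some l"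
    "lvar l \<in> tape_vars A1 A2" "lvar l \<notin> M"
    "\<forall>I. query_model q (map skeleton A1) (map skeleton A2) I \<longrightarrow> I (lvar l)"
proof -
  let ?T = "map (find_marked q False) A1 @ map (find_marked q True) A2"
  have "\<forall>c\<in>set ?T. \<forall>pol. forcing c = Some pol \<longrightarrow> (\<exists>l\<in>set (lits c). lpos l = pol \<and> \<not> ltrue l)"
    using clause_forcing_lit by (fastforce simp: find_marked_def)
  moreover have "\<exists>c\<in>set ?T. forcing c \<noteq> None"
  proof -
    from fd obtain r c where c: "c \<in> set (if r then A2 else A1)" "clause_forcing q r c \<noteq> None"
      unfolding has_forcing_def by (metis (full_types))
    have "find_marked q r c \<in> set ?T" using c(1) by (cases r) auto
    moreover have "forcing (find_marked q r c) \<noteq> None" using c(2) by (simp add: find_marked_def)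
    ultimately show ?thesis by blast
  qed
  ultimately obtain c l where c: "c \<in> set ?T" and l: "l \<in> set (lits c)" and src:
      "forcing_lit ?T = Some l"
    and cl: "forcing c = Some (lpos l)" and unmarked: "\<not> ltrue l"
    using forcing_lit_exists by blast
  obtain r c0 where c0: "c = find_marked q r c0" and c0A: "c0 \<in> set (if r then A2 else A1)"
    using c by auto
  obtain l0 where l0: "l0 \<in> set (lits c0)" "l = l0\<lparr>lmatch := True\<rparr>"
    using l c0 by (auto simp: find_marked_def)
  have lits: "\<forall>l\<in>set (lits c0). ltrue l \<longleftrightarrow> lvar l \<in> M"
    using prop_inv_ltrue[OF pi] c0A by (auto split: if_splits)
  have "lvar l \<in> tape_vars A1 A2" using l0 c0A
      by (auto simp: tape_vars_def all_lits_def split: if_splits)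
  moreover have "lvar l \<notin> M" using lits l0 unmarked by auto
  moreover have "I (lvar l)" if I: "query_model q (map skeleton A1) (map skeleton A2) I" for I
  proof -
    have "clause_constraint q r I (skeleton c0)" using I c0A
        by (auto simp: query_model_def split: if_splits)
    moreover have "horn_clause (fst (skeleton c0))"
      using pi c0A by (auto simp: prop_inv_def horn_skeleton_def split: if_splits)
    moreover have "clause_forcing q r c0 = Some (lpos l0)" using cl c0 l0 by (simp add: find_marked_def)
    ultimately show ?thesis using forcing_lit_forced[OF lits query_model_forced[OF I pi]]
        l0 unmarked by simp
  qed
  ultimately show ?thesis using that src by blast
qed

lemma prop_inv_mark_true:
  assumes pi: "prop_inv q M A1 A2" and v: "v \<in> tape_vars A1 A2"
    and forced: "\<forall>I. query_model q (map skeleton A1) (map skeleton A2) I \<longrightarrow> I v"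
  shows "prop_inv q (insert v M) (mark_true v A1) (mark_true v A2)"
  using assms tape_vars_skeleton[OF skeleton_mark_true skeleton_mark_true, of v A1 v A2]
  unfolding prop_inv_def tape_vars_def by (auto simp: all_lits_mark_true)

lemma propagation_step:
  assumes pi: "prop_inv q M A1 A2" and "\<not> has_conflict q A1 A2" and fd: "has_forcing q A1 A2"
  obtains v where "v \<in> tape_vars A1 A2" "v \<notin> M"
    "(ctrl_round ^^ (2 * length (bits v) + 3)) (Cont (parse_start, find_start q), tape_cells A1 A2) =
      (Cont (parse_start, find_start q), tape_cells (mark_true v A1) (mark_true v A2))"
    "prop_inv q (insert v M) (mark_true v A1) (mark_true v A2)"
proof -
  obtain l where src: "forcing_lit (map (find_marked q False) A1 @ map (find_marked q True) A2) = Some l"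
    and v: "lvar l \<in> tape_vars A1 A2" "lvar l \<notin> M"
    and forced: "\<forall>I. query_model q (map skeleton A1) (map skeleton A2) I \<longrightarrow> I (lvar l)"
    using forced_var_exists[OF pi fd] by blast
  have "\<forall>l\<in>set (all_lits A1). lread l = 0" "\<forall>l\<in>set (all_lits A2). lread l = 0"
    using pi by (auto simp: prop_inv_def)
  then have "(ctrl_round ^^ (2 * length (bits (lvar l)) + 2))
      (Cont (parse_start, Peek q None None None),
       tape_cells (map (find_marked q False) A1) (map (find_marked q True) A2)) =
    (Cont (parse_start, find_start q), tape_cells (mark_true (lvar l) A1) (mark_true (lvar l) A2))"
    using compare_rounds[OF src, of 0 q] by (simp add: find_marked_unread commit_compare_find_marked)
  moreover have "ctrl_round (Cont (parse_start, find_start q), tape_cells A1 A2) =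
      (Cont (parse_start, Peek q None None None),
       tape_cells (map (find_marked q False) A1) (map (find_marked q True) A2))"
    using assms by (simp add: ctrl_round_Find)
  moreover have "2 * length (bits (lvar l)) + 3 = Suc (2 * length (bits (lvar l)) + 2)" by simp
  ultimately have "(ctrl_round ^^ (2 * length (bits (lvar l)) + 3))
      (Cont (parse_start, find_start q), tape_cells A1 A2) =
      (Cont (parse_start, find_start q), tape_cells (mark_true (lvar l) A1) (mark_true (lvar l) A2))"
    by (simp only: funpow_Suc_apply)
  with v prop_inv_mark_true[OF pi v(1) forced] show ?thesis by (intro that)
qed

lemma propagation_stops:
  assumes pi: "prop_inv q M A1 A2" and "has_conflict q A1 A2 \<or> \<not> has_forcing q A1 A2"
  shows "\<exists>B1 B2. (ctrl_round ^^ 1) (Cont (parse_start, find_start q), tape_cells A1 A2) =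
      (after_query q (query_sat q (map skeleton A1) (map skeleton A2)), tape_cells B1 B2) \<and>
    map skeleton B1 = map skeleton A1 \<and> map skeleton B2 = map skeleton A2"
proof -
  have round: "ctrl_round (Cont (parse_start, find_start q), tape_cells A1 A2) =
    (after_query q (query_sat q (map skeleton A1) (map skeleton A2)),
     tape_cells (map (find_marked q False) A1) (map (find_marked q True) A2))"
    using assms find_conflict_unsat[OF pi] find_quiescent_sat[OF pi] by (auto simp: ctrl_round_Find)
  have sk: "map skeleton (map (find_marked q r) A) = map skeleton A" for r A
    by (simp add: comp_def)
  show ?thesis
    by (rule exI[of _ "map (find_marked q False) A1"], rule exI[of _ "map (find_marked q True) A2"])
      (simp add: round sk)
qed

lemma card_Diff_insert_Suc: "finite A \<Longrightarrow> v \<in> A \<Longrightarrow> v \<notin> M \<Longrightarrow> Suc (card (A - insert v M)) = card (A - M)"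
proof -
  assume "finite A" "v \<in> A" "v \<notin> M"
  then have "v \<in> A - M" by blast
  moreover have "A - insert v M = (A - M) - {v}" by blast
  ultimately show ?thesis using card_Suc_Diff1[OF finite_Diff[OF \<open>finite A\<close>]] by metis
qed

lemma propagation_rounds:
  assumes "prop_inv q M A1 A2" and "\<forall>v\<in>tape_vars A1 A2. length (bits v) \<le> N"
  shows "\<exists>k \<le> card (tape_vars A1 A2 - M) * (2 * N + 3) + 1. \<exists>B1 B2.
    (ctrl_round ^^ k) (Cont (parse_start, find_start q), tape_cells A1 A2) =
      (after_query q (query_sat q (map skeleton A1) (map skeleton A2)), tape_cells B1 B2) \<and>
    map skeleton B1 = map skeleton A1 \<and> map skeleton B2 = map skeleton A2"
  using assms
proof (induction "card (tape_vars A1 A2 - M)" arbitrary: M A1 A2 rule: less_induct)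
  case less
  show ?case
  proof (cases "has_conflict q A1 A2 \<or> \<not> has_forcing q A1 A2")
    case True
    then show ?thesis using propagation_stops[OF less.prems(1)] by (intro exI[of _ 1]) auto
  next
    case False
    then obtain v where v: "v \<in> tape_vars A1 A2" "v \<notin> M"
      and run: "(ctrl_round ^^ (2 * length (bits v) + 3))
          (Cont (parse_start, find_start q), tape_cells A1 A2) =
        (Cont (parse_start, find_start q), tape_cells (mark_true v A1) (mark_true v A2))"
      and pi: "prop_inv q (insert v M) (mark_true v A1) (mark_true v A2)"
      using propagation_step[OF less.prems(1)] by blast
    have vars: "tape_vars (mark_true v A1) (mark_true v A2) = tape_vars A1 A2"
      by (rule tape_vars_skeleton) simp_all
    have fewer: "Suc (card (tape_vars A1 A2 - insert v M)) = card (tape_vars A1 A2 - M)"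
      using card_Diff_insert_Suc[OF finite_tape_vars v] .
    then have "card (tape_vars (mark_true v A1) (mark_true v A2) - insert v M) < card
        (tape_vars A1 A2 - M)"
      unfolding vars by linarith
    moreover have "\<forall>w\<in>tape_vars (mark_true v A1) (mark_true v A2). length (bits w) \<le> N"
      unfolding vars by (rule less.prems(2))
    ultimately obtain k C1 C2 where k: "k \<le> card (tape_vars A1 A2 - insert v M) * (2 * N + 3) + 1"
      and run': "(ctrl_round ^^ k) (Cont (parse_start, find_start q),
          tape_cells (mark_true v A1) (mark_true v A2)) =
        (after_query q (query_sat q (map skeleton A1) (map skeleton A2)), tape_cells C1 C2)"
      and C: "map skeleton C1 = map skeleton A1" "map skeleton C2 = map skeleton A2"
      using less.hyps[OF _ pi] unfolding vars skeleton_mark_true by blast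
    have "card (tape_vars A1 A2 - M) * (2 * N + 3) =
        card (tape_vars A1 A2 - insert v M) * (2 * N + 3) + (2 * N + 3)"
      by (simp only: fewer[symmetric] mult_Suc add.commute)
    moreover have "length (bits v) \<le> N" using less.prems(2) v(1) by blast
    ultimately have "k + (2 * length (bits v) + 3) \<le> card (tape_vars A1 A2 - M) * (2 * N + 3) + 1"
      using k by linarith
    moreover have "(ctrl_round ^^ (k + (2 * length (bits v) + 3)))
        (Cont (parse_start, find_start q), tape_cells A1 A2) =
        (after_query q (query_sat q (map skeleton A1) (map skeleton A2)), tape_cells C1 C2)"
      using run run' by (simp only: funpow_add comp_def)
    ultimately show ?thesis using C by blast
  qed
qed

section \<open>Running time of unit propagation\<close>

definition formula_of :: "clause_info list \<Rightarrow> formula" where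
  "formula_of A = map (\<lambda>c. map (\<lambda>l. (lvar l, lpos l)) (lits c)) A"

lemma skeleton_formula_of: "map skeleton A = zip (formula_of A) (map selected A)"
  by (induction A) (auto simp: skeleton_def formula_of_def)

lemma horn_skeleton_iff: "horn_skeleton (map skeleton A) = horn (formula_of A)"
  by (auto simp: horn_skeleton_def horn_def formula_of_def skeleton_def)

lemma length_lits_cells: "length (lits_cells pf ls sel s)
    = Suc (sum_list (map (\<lambda>l. Suc (length (bits (lvar l)))) ls))"
proof (induction ls arbitrary: pf)
  case (Cons l ls)
  have "length (bit_cells j ss) = length ss" for j ss by (induction ss arbitrary: j) auto
  then show ?case using Cons by simp
qed simp

definition clause_size :: "clause \<Rightarrow> nat" where
  "clause_size c = Suc (sum_list (map (\<lambda>l. Suc (length (bits (fst l)))) c))"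

lemma length_clause_cells: "length (clause_cells c) = clause_size (map (\<lambda>l. (lvar l, lpos l)) (lits c))"
  by (simp add: clause_cells_def length_lits_cells clause_size_def comp_def)

lemma length_tape_cells: "length (tape_cells A1 A2) = sum_list (map clause_size (formula_of A1))
    + sum_list (map clause_size (formula_of A2)) + 2"
proof -
  have "length (concat (map clause_cells A)) = sum_list (map clause_size (formula_of A))" for A
    by (induction A) (auto simp: length_clause_cells formula_of_def)
  then show ?thesis by (simp add: tape_cells_def formula_cells_def)
qed

lemma length_bits_less_clause_size: "l \<in> set c \<Longrightarrow> length (bits (fst l)) < clause_size c"
proof (induction c)
  case (Cons a c)
  then show ?case by (auto simp: clause_size_def)
qed simp

lemma length_bits_le_size: "l \<in> set (all_lits A)
    \<Longrightarrow> length (bits (lvar l)) \<le> sum_list (map clause_size (formula_of A))"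
proof (induction A)
  case (Cons c A)
  show ?case
  proof (cases "l \<in> set (lits c)")
    case True
    have "(lvar l, lpos l) \<in> set (map (\<lambda>l. (lvar l, lpos l)) (lits c))" using True by auto
    then have "length (bits (lvar l)) < clause_size (map (\<lambda>l. (lvar l, lpos l)) (lits c))" using
        length_bits_less_clause_size by fastforce
    then show ?thesis by (simp add: formula_of_def)
  next
    case False
    then have "l \<in> set (all_lits A)" using Cons.prems by (simp add: all_lits_def)
    then show ?thesis using Cons.IH by (simp add: formula_of_def)
  qed
qed (simp add: all_lits_def)

lemma length_bits_le_tape: "\<forall>v\<in>tape_vars A1 A2. length (bits v) \<le> length (tape_cells A1 A2)"
  using length_bits_le_size[of _ A1] length_bits_le_size[of _ A2]
  unfolding length_tape_cells tape_vars_def by fastforce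

lemma length_less_clause_size: "length c < clause_size c"
  by (induction c) (auto simp: clause_size_def)

lemma card_tape_vars_le: "card (tape_vars A1 A2) \<le> length (tape_cells A1 A2)"
proof -
  have "card (tape_vars A1 A2) \<le> length (all_lits A1 @ all_lits A2)"
    unfolding tape_vars_def by (rule order_trans[OF card_image_le[OF finite_set] card_length])
  moreover have la: "length (all_lits A) \<le> sum_list (map clause_size (formula_of A))" for A
  proof (induction A)
    case (Cons c A)
    have "length (lits c) \<le> clause_size (map (\<lambda>l. (lvar l, lpos l)) (lits c))" using
        length_less_clause_size[of "map (\<lambda>l. (lvar l, lpos l)) (lits c)"] by simp
    then show ?case using Cons by (simp add: all_lits_def formula_of_def)
  qed (simp add: all_lits_def formula_of_def)
  ultimately have a: "card (tape_vars A1 A2) \<le> length (all_lits A1) + length (all_lits A2)" by simp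
  have b: "length (all_lits A1) \<le> sum_list (map clause_size (formula_of A1))" "length (all_lits A2)
      \<le> sum_list (map clause_size (formula_of A2))"
    using la by blast+
  show ?thesis unfolding length_tape_cells using a b by linarith
qed

definition prop_bound :: "nat \<Rightarrow> nat" where "prop_bound N = N * (2 * N + 3) + 1"

lemma propagation_bounded:
  assumes "prop_inv q {} A1 A2"
  shows "\<exists>k \<le> prop_bound (length (tape_cells A1 A2)). \<exists>B1 B2.
    (ctrl_round ^^ k) (Cont (parse_start, find_start q), tape_cells A1 A2)
        = (after_query q (query_sat q (map skeleton A1) (map skeleton A2)), tape_cells B1 B2)
    \<and> map skeleton B1 = map skeleton A1 \<and> map skeleton B2 = map skeleton A2"
proof -
  obtain k B1 B2 where k: "k \<le> card (tape_vars A1 A2 - {}) * (2 * length (tape_cells A1 A2) + 3) + 1"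
    and r: "(ctrl_round ^^ k) (Cont (parse_start, find_start q), tape_cells A1 A2)
        = (after_query q (query_sat q (map skeleton A1) (map skeleton A2)), tape_cells B1 B2)
    \<and> map skeleton B1 = map skeleton A1 \<and> map skeleton B2 = map skeleton A2"
    using propagation_rounds[OF assms length_bits_le_tape] by blast
  have "k \<le> prop_bound (length (tape_cells A1 A2))"
  proof -
    have "card (tape_vars A1 A2 - {}) * (2 * length (tape_cells A1 A2) + 3) \<le> length
        (tape_cells A1 A2) * (2 * length (tape_cells A1 A2) + 3)"
      using card_tape_vars_le[of A1 A2] by (intro mult_right_mono) auto
    then show ?thesis using k unfolding prop_bound_def by linarith
  qed
  then show ?thesis using r by blast
qed

definition unit_sel :: "nat \<Rightarrow> nat \<Rightarrow> bool list" where
  "unit_sel n i = map (\<lambda>k. k = i) [0..<n]"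

lemma length_unit_sel[simp]: "length (unit_sel n i) = n" by (simp add: unit_sel_def)

lemma length_sel_shift[simp]: "length (sel_shift isN pv ss) = length ss"
  by (induction ss arbitrary: pv) auto

lemma nth_sel_shift: "k < length ss \<Longrightarrow> sel_shift isN pv ss ! k
    = (if k = 0 then pv else isN \<and> ss ! (k - 1))"
  by (induction ss arbitrary: pv k) (auto simp: nth_Cons split: nat.split)

lemma sel_shift_first: "sel_shift False True ss = unit_sel (length ss) 0"
  by (rule nth_equalityI) (auto simp: nth_sel_shift unit_sel_def)

lemma sel_shift_next: "sel_shift True False (unit_sel n i) = unit_sel n (Suc i)"
  by (rule nth_equalityI) (auto simp: nth_sel_shift unit_sel_def)

lemma True_in_unit_sel: "True \<in> set (unit_sel n i) \<longleftrightarrow> i < n"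
  by (auto simp: unit_sel_def)

lemma formula_of_set_selected: "formula_of (set_selected A S) = formula_of A"
  by (induction A S rule: set_selected.induct) (auto simp: formula_of_def)

lemma formula_of_reset_clause: "formula_of (map reset_clause A) = formula_of A"
  by (simp add: formula_of_def reset_clause_def reset_lit_def comp_def)

lemma selected_set_selected: "length S = length A \<Longrightarrow> map selected (set_selected A S) = S"
  by (induction A S rule: set_selected.induct) auto

lemma selected_reset_clause: "map selected (map reset_clause A) = map selected A"
  by (simp add: reset_clause_def comp_def)

lemma all_lits_set_selected: "all_lits (set_selected A S) = all_lits A"
  by (induction A S rule: set_selected.induct) (auto simp: all_lits_def)

lemma all_lits_reset_clause: "all_lits (map reset_clause A) = map reset_lit (all_lits A)"
  by (induction A) (auto simp: all_lits_def reset_clause_def)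

lemma ctrl_round_Select:
  "ctrl_round (Cont (parse_start, Select isN rt q False pv), tape_cells A1 A2) =
   (let SS = sel_shift isN pv (map selected (if rt then A2 else A1)) in
    (if True \<in> set SS then on_selected rt q else on_exhausted rt q,
     tape_cells (if rt then map reset_clause A1 else set_selected (map reset_clause A1) SS)
              (if rt then set_selected (map reset_clause A2) SS else map reset_clause A2)))"
proof -
  obtain pv' where "tape_sweep phase_bit_mode phase_lit phase_clause (Select isN rt q False pv) A1 A2 =
    (Select isN rt q (False \<or> True \<in> set (sel_shift isN pv (map selected (if rt then A2 else A1)))) pv',
     if rt then map reset_clause A1 else set_selected (map reset_clause A1)
         (sel_shift isN pv (map selected A1)),
     if rt then set_selected (map reset_clause A2) (sel_shift isN pv (map selected A2)) else
         map reset_clause A2)"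
    using tape_sweep_Select by blast
  then show ?thesis by (simp add: ctrl_round_Cont Let_def split: if_splits)
qed

lemma prop_inv_clean:
  assumes "\<forall>l\<in>set (all_lits B1 @ all_lits B2). \<not> ltrue l \<and> lread l
      = 0" "horn (formula_of B1)" "horn (formula_of B2)"
  shows "prop_inv q {} B1 B2"
  using assms by (auto simp: prop_inv_def horn_skeleton_iff)

lemma clean_after_select:
  "\<forall>l\<in>set (all_lits (if rt then map reset_clause A1 else set_selected (map reset_clause A1) S)
      @ all_lits (if rt then set_selected (map reset_clause A2) S else map reset_clause A2)).
     \<not> ltrue l \<and> lread l = 0"
  by (auto simp: all_lits_set_selected all_lits_reset_clause reset_lit_def)

lemma skeleton_eqD: "map skeleton C = map skeleton A \<Longrightarrow> formula_of C = formula_of A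
    \<and> map selected C = map selected A"
proof -
  assume a: "map skeleton C = map skeleton A"
  have "formula_of X = map (fst \<circ> skeleton) X" "map selected X = map (snd \<circ> skeleton) X" for X
    by (auto simp: formula_of_def skeleton_def)
  then show ?thesis using a by (metis map_map)
qed

lemma length_formula_of: "length (formula_of A) = length A"
  by (simp add: formula_of_def)

definition tape_size :: "formula \<Rightarrow> formula \<Rightarrow> nat" where
  "tape_size E1 E2 = sum_list (map clause_size E1) + sum_list (map clause_size E2) + 2"

lemma length_tape_cells_eq: "formula_of A1 = E1 \<Longrightarrow> formula_of A2 = E2
    \<Longrightarrow> length (tape_cells A1 A2) = tape_size E1 E2"
  by (simp add: length_tape_cells tape_size_def)

definition sel_query_sat :: "query \<Rightarrow> bool \<Rightarrow> formula \<Rightarrow> formula \<Rightarrow> bool list \<Rightarrow> nat \<Rightarrow> bool" where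
  "sel_query_sat q rt E1 E2 So j = (let L = length (if rt then E2 else E1) in
     query_sat q (zip E1 (if rt then So else unit_sel L j)) (zip E2 (if rt then unit_sel L j else So)))"

lemma select_round:
  assumes e: "formula_of C1 = E1" "formula_of C2 = E2" and h: "horn E1" "horn E2"
    and s: "map selected (if rt then C2 else C1) = S" "length S = length (if rt then E2 else E1)"
    and so: "map selected (if rt then C1 else C2) = So"
  shows "\<exists>D1 D2. ctrl_round (Cont (parse_start, Select isN rt q False pv), tape_cells C1 C2) =
      (if True \<in> set (sel_shift isN pv S) then on_selected rt q else on_exhausted rt q,
          tape_cells D1 D2) \<and>
    formula_of D1 = E1 \<and> formula_of D2 = E2 \<and> map selected (if rt then D2 else D1) = sel_shift isN pv S \<and>
    map selected (if rt then D1 else D2) = So \<and> prop_inv q' {} D1 D2"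
proof -
  let ?S = "sel_shift isN pv S"
  let ?D1 = "if rt then map reset_clause C1 else set_selected (map reset_clause C1) ?S"
  let ?D2 = "if rt then set_selected (map reset_clause C2) ?S else map reset_clause C2"
  have len: "length ?S = length (if rt then C2 else C1)"
    using s e by (auto simp: length_formula_of[symmetric])
  have "ctrl_round (Cont (parse_start, Select isN rt q False pv), tape_cells C1 C2) =
      (if True \<in> set ?S then on_selected rt q else on_exhausted rt q, tape_cells ?D1 ?D2)"
    using s by (simp add: ctrl_round_Select Let_def split: if_splits)
  moreover have "formula_of ?D1 = E1" "formula_of ?D2 = E2"
    using e by (auto simp: formula_of_set_selected formula_of_reset_clause)
  moreover have "map selected (if rt then ?D2 else ?D1)
      = ?S" "map selected (if rt then ?D1 else ?D2) = So"
    using len so by (auto simp: selected_set_selected selected_reset_clause reset_clause_def)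
  moreover have "prop_inv q' {} ?D1 ?D2"
    using prop_inv_clean[OF clean_after_select] calculation(2,3) h by simp
  ultimately show ?thesis by blast
qed

type_synonym ctrl_config = "(parse_state \<times> phase) outcome \<times> cell list"

definition reach_within :: "nat \<Rightarrow> ctrl_config \<Rightarrow> (ctrl_config \<Rightarrow> bool) \<Rightarrow> bool" where
  "reach_within B x P = (\<exists>k \<le> B. P ((ctrl_round ^^ k) x))"

lemma reach_within_trans:
  assumes "reach_within B1 x P" and "\<And>y. P y \<Longrightarrow> reach_within B2 y Q"
  shows "reach_within (B1 + B2) x Q"
proof -
  obtain k1 where k1: "k1 \<le> B1" "P ((ctrl_round ^^ k1) x)" using assms(1)
      by (auto simp: reach_within_def)
  obtain k2 where k2: "k2 \<le> B2" "Q ((ctrl_round ^^ k2) ((ctrl_round ^^ k1) x))"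
    using assms(2)[OF k1(2)] by (auto simp: reach_within_def)
  have "(ctrl_round ^^ (k2 + k1)) x = (ctrl_round ^^ k2) ((ctrl_round ^^ k1) x)"
    by (simp only: funpow_add comp_def)
  then show ?thesis using k1 k2 unfolding reach_within_def by (intro exI[of _ "k2 + k1"]) auto
qed

lemma reach_within_mono: "reach_within B x P \<Longrightarrow> B \<le> B' \<Longrightarrow> reach_within B' x P"
  unfolding reach_within_def using le_trans by blast

lemma reach_within_weaken: "reach_within B x P \<Longrightarrow> (\<And>y. P y \<Longrightarrow> Q y) \<Longrightarrow> reach_within B x Q"
  unfolding reach_within_def by blast

lemma reach_within_refl: "P x \<Longrightarrow> reach_within B x P"
  by (auto simp: reach_within_def intro: exI[of _ 0])

lemma reach_within_at: "(ctrl_round ^^ k) x = y \<Longrightarrow> P y \<Longrightarrow> k \<le> B \<Longrightarrow> reach_within B x P"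
  unfolding reach_within_def by blast

lemma reach_within_1: "P (ctrl_round x) \<Longrightarrow> reach_within 1 x P"
  by (rule reach_within_at[of 1]) simp_all

lemma reach_within_funpow: "reach_within B ((ctrl_round ^^ k) x) P \<Longrightarrow> reach_within (k + B) x P"
proof -
  assume "reach_within B ((ctrl_round ^^ k) x) P"
  then obtain j where "j \<le> B" "P ((ctrl_round ^^ (j + k)) x)"
    by (auto simp: reach_within_def funpow_add)
  then show ?thesis unfolding reach_within_def by (intro exI[of _ "j + k"]) auto
qed

lemma reach_within_halted:
  assumes "reach_within B x (\<lambda>z. fst z = R)" "R = Acc \<or> R = Rej"
  shows "fst ((ctrl_round ^^ B) x) = R"
proof -
  obtain k where k: "k \<le> B" "fst ((ctrl_round ^^ k) x)
      = R" using assms(1) by (auto simp: reach_within_def)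
  obtain t where t: "(ctrl_round ^^ k) x = (R, t)" using k(2) by (metis prod.collapse)
  have "(ctrl_round ^^ B) x = (ctrl_round ^^ (B - k)) ((ctrl_round ^^ k) x)"
    using k(1) by (metis funpow_add le_add_diff_inverse2 o_apply)
  then show ?thesis using t sweep_round_halted[OF assms(2)] by (simp add: ctrl_round_def)
qed

(* In a loop over the clauses of formula rt, So are the selection marks of the other formula. *)
definition tape_at :: "formula \<Rightarrow> formula \<Rightarrow> bool \<Rightarrow> bool list \<Rightarrow> (parse_state \<times> phase) outcome \<Rightarrow>
    ctrl_config \<Rightarrow> bool" where
  "tape_at E1 E2 rt So R y \<longleftrightarrow> (\<exists>B1 B2. y = (R, tape_cells B1 B2) \<and> formula_of B1 = E1 \<and>
     formula_of B2 = E2 \<and> map selected (if rt then B1 else B2) = So)"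

definition loop_start :: "query \<Rightarrow> formula \<Rightarrow> formula \<Rightarrow> bool \<Rightarrow> bool list \<Rightarrow> nat \<Rightarrow> ctrl_config \<Rightarrow> bool" where
  "loop_start q E1 E2 rt So i y \<longleftrightarrow> (\<exists>A1 A2. y = (Cont (parse_start, find_start q), tape_cells A1 A2) \<and>
     formula_of A1 = E1 \<and> formula_of A2 = E2 \<and>
     map selected (if rt then A2 else A1) = unit_sel (length (if rt then E2 else E1)) i \<and>
     map selected (if rt then A1 else A2) = So \<and> prop_inv q {} A1 A2)"

lemma tape_atI:
  "formula_of B1 = E1 \<Longrightarrow> formula_of B2 = E2 \<Longrightarrow> map selected (if rt then B1 else B2) = So \<Longrightarrow>
    tape_at E1 E2 rt So R (R, tape_cells B1 B2)"
  unfolding tape_at_def by blast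

lemma loop_startI:
  "formula_of A1 = E1 \<Longrightarrow> formula_of A2 = E2 \<Longrightarrow>
    map selected (if rt then A2 else A1) = unit_sel (length (if rt then E2 else E1)) i \<Longrightarrow>
    map selected (if rt then A1 else A2) = So \<Longrightarrow> prop_inv q {} A1 A2 \<Longrightarrow>
    loop_start q E1 E2 rt So i (Cont (parse_start, find_start q), tape_cells A1 A2)"
  unfolding loop_start_def by blast

lemma select_shift_round:
  assumes h: "horn E1" "horn E2" and "on_selected rt q = Cont (parse_start, find_start q)"
    and B: "formula_of B1 = E1" "formula_of B2 = E2" "map selected (if rt then B1 else B2) = So"
    and S: "sel_shift isN pv (map selected (if rt then B2 else B1))
        = unit_sel (length (if rt then E2 else E1)) i"
  shows "reach_within 1 (Cont (parse_start, Select isN rt q False pv), tape_cells B1 B2)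
    (\<lambda>z. if i < length (if rt then E2 else E1) then loop_start q E1 E2 rt So i z
         else tape_at E1 E2 rt So (on_exhausted rt q) z)"
proof -
  have "length (map selected (if rt then B2 else B1)) = length (if rt then E2 else E1)"
    using B by (auto simp: length_formula_of[symmetric])
  then obtain D1 D2 where D: "ctrl_round (Cont (parse_start, Select isN rt q False pv),
      tape_cells B1 B2) =
      (if i < length (if rt then E2 else E1) then on_selected rt q else on_exhausted rt
          q, tape_cells D1 D2)"
    "formula_of D1 = E1" "formula_of D2 = E2"
    "map selected (if rt then D2 else D1) = unit_sel (length (if rt then E2 else E1)) i"
    "map selected (if rt then D1 else D2) = So" "prop_inv q {} D1 D2"
    using select_round[OF B(1,2) h refl _ B(3), where isN=isN and pv=pv and q=q and q'=q] S
    by (auto simp: True_in_unit_sel)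
  show ?thesis
    by (rule reach_within_1) (use D assms(3) in \<open>auto intro: tape_atI loop_startI\<close>)
qed

lemma loop_start_propagation:
  assumes "loop_start q E1 E2 rt So i y"
  shows "\<exists>k \<le> prop_bound (tape_size E1 E2). \<exists>C1 C2.
    (ctrl_round ^^ k) y = (after_query q (sel_query_sat q rt E1 E2 So i), tape_cells C1 C2) \<and>
    formula_of C1 = E1 \<and> formula_of C2 = E2 \<and>
    map selected (if rt then C2 else C1) = unit_sel (length (if rt then E2 else E1)) i \<and>
    map selected (if rt then C1 else C2) = So"
proof -
  obtain A1 A2 where A: "y = (Cont (parse_start, find_start q), tape_cells A1 A2)"
    "formula_of A1 = E1" "formula_of A2 = E2"
    "map selected (if rt then A2 else A1) = unit_sel (length (if rt then E2 else E1)) i"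
    "map selected (if rt then A1 else A2) = So"
    and pi: "prop_inv q {} A1 A2"
    using assms unfolding loop_start_def by blast
  obtain k C1 C2 where k: "k \<le> prop_bound (tape_size E1 E2)"
    and run: "(ctrl_round ^^ k) y =
      (after_query q (query_sat q (map skeleton A1) (map skeleton A2)), tape_cells C1 C2)"
    and C: "map skeleton C1 = map skeleton A1" "map skeleton C2 = map skeleton A2"
    using propagation_bounded[OF pi] A length_tape_cells_eq[OF A(2,3)] by auto
  have "query_sat q (map skeleton A1) (map skeleton A2) = sel_query_sat q rt E1 E2 So i"
    using A by (auto simp: skeleton_formula_of sel_query_sat_def Let_def)
  moreover have "formula_of C1 = E1" "formula_of C2 = E2" "map selected C1 = map selected A1"
    "map selected C2 = map selected A2"
    using skeleton_eqD[OF C(1)] skeleton_eqD[OF C(2)] A by auto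
  ultimately have "(ctrl_round ^^ k) y = (after_query q (sel_query_sat q rt E1 E2 So i), tape_cells C1 C2)"
    "formula_of C1 = E1" "formula_of C2 = E2"
    "map selected (if rt then C2 else C1) = unit_sel (length (if rt then E2 else E1)) i"
    "map selected (if rt then C1 else C2) = So"
    using run A by auto
  then show ?thesis using k by blast
qed

lemma select_iteration:
  assumes q: "after_query q True = SS" "after_query q False = select_next rt q"
      "on_selected rt q = Cont (parse_start, find_start q)" "on_exhausted rt q = SE"
    and h: "horn E1" "horn E2" and y: "loop_start q E1 E2 rt So i y"
  shows "reach_within (prop_bound (tape_size E1 E2) + 1) y (\<lambda>z.
    if sel_query_sat q rt E1 E2 So i then tape_at E1 E2 rt So SS z
    else if Suc i < length (if rt then E2 else E1) then loop_start q E1 E2 rt So (Suc i) z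
    else tape_at E1 E2 rt So SE z)"
proof -
  let ?L = "length (if rt then E2 else E1)"
  obtain k C1 C2 where k: "k \<le> prop_bound (tape_size E1 E2)"
    and run: "(ctrl_round ^^ k) y = (after_query q (sel_query_sat q rt E1 E2 So i), tape_cells C1 C2)"
    and C': "formula_of C1 = E1" "formula_of C2 = E2"
      "map selected (if rt then C2 else C1) = unit_sel ?L i" "map selected (if rt then C1 else C2) = So"
    using loop_start_propagation[OF y] by blast
  show ?thesis
  proof (cases "sel_query_sat q rt E1 E2 So i")
    case True
    then show ?thesis using k C' q(1)
      by (intro reach_within_at[OF run]) (auto intro: tape_atI)
  next
    case False
    have "map selected (if rt then C1 else C2) = So"
      "sel_shift True False (map selected (if rt then C2 else C1)) = unit_sel ?L (Suc i)"
      using C' by (auto simp: sel_shift_next)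
    then have "reach_within 1 ((ctrl_round ^^ k) y) (\<lambda>z. if Suc i < ?L
        then loop_start q E1 E2 rt So (Suc i) z else tape_at E1 E2 rt So (on_exhausted rt q) z)"
      unfolding run using False q(2) select_shift_round[OF h q(3) C'(1,2)]
      by (simp add: select_next_def)
    then have "reach_within (k + 1) y (\<lambda>z. if Suc i < ?L
        then loop_start q E1 E2 rt So (Suc i) z else tape_at E1 E2 rt So SE z)"
      unfolding q(4) by (rule reach_within_funpow)
    then have "reach_within (prop_bound (tape_size E1 E2) + 1) y (\<lambda>z. if Suc i < ?L
        then loop_start q E1 E2 rt So (Suc i) z else tape_at E1 E2 rt So SE z)"
      by (rule reach_within_mono) (use k in simp)
    then show ?thesis by (simp only: False if_False)
  qed
qed

lemma bex_atLeastLessThan_eq: "i < L \<Longrightarrow> (\<exists>j\<in>{i..<L}. P j) \<longleftrightarrow> P i \<or> (\<exists>j\<in>{Suc i..<L}. P j)"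
proof -
  assume "i < L"
  then have "{i..<L} = insert i {Suc i..<L}" by auto
  then show ?thesis by simp
qed

lemma select_loop:
  assumes q: "after_query q True = SS" "after_query q False = select_next rt q"
      "on_selected rt q = Cont (parse_start, find_start q)" "on_exhausted rt q = SE"
    and h: "horn E1" "horn E2" and L: "L = length (if rt then E2 else E1)"
  shows "i < L \<Longrightarrow> loop_start q E1 E2 rt So i y \<Longrightarrow>
    reach_within ((L - i) * (prop_bound (tape_size E1 E2) + 1)) y
      (tape_at E1 E2 rt So (if \<exists>j\<in>{i..<L}. sel_query_sat q rt E1 E2 So j then SS else SE))"
proof (induction "L - i" arbitrary: i y)
  case 0
  then show ?case by simp
next
  case (Suc m)
  let ?P = "prop_bound (tape_size E1 E2) + 1" and ?sat = "sel_query_sat q rt E1 E2 So"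
  have step: "reach_within ?P y (\<lambda>z. if ?sat i then tape_at E1 E2 rt So SS z
      else if Suc i < L then loop_start q E1 E2 rt So (Suc i) z else tape_at E1 E2 rt So SE z)"
    using select_iteration[OF q h Suc.prems(2)] unfolding L[symmetric] .
  have "L - i = Suc (L - Suc i)" using Suc.prems(1) by simp
  then have bound: "(L - i) * ?P = ?P + (L - Suc i) * ?P" by (simp only: mult_Suc)
  have ex: "(\<exists>j\<in>{i..<L}. ?sat j) \<longleftrightarrow> ?sat i \<or> (\<exists>j\<in>{Suc i..<L}. ?sat j)"
    using bex_atLeastLessThan_eq[OF Suc.prems(1)] .
  show ?case
  proof (cases "\<not> ?sat i \<and> Suc i < L")
    case True
    have "reach_within (?P + (L - Suc i) * ?P) y
        (tape_at E1 E2 rt So (if \<exists>j\<in>{Suc i..<L}. ?sat j then SS else SE))"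
      by (rule reach_within_trans[OF step]) (use True Suc.hyps(1)[of "Suc i"] Suc.hyps(2) in auto)
    then show ?thesis unfolding bound using True ex by simp
  next
    case False
    then have "(\<exists>j\<in>{i..<L}. ?sat j) \<longleftrightarrow> ?sat i" using ex by auto
    then have "reach_within ?P y (tape_at E1 E2 rt So (if \<exists>j\<in>{i..<L}. ?sat j then SS else SE))"
      by (intro reach_within_weaken[OF step]) (use False in auto)
    then show ?thesis by (rule reach_within_mono) (unfold bound, rule le_add1)
  qed
qed

lemma select_loop_first:
  assumes q: "after_query q True = SS" "after_query q False = select_next rt q"
      "on_selected rt q = Cont (parse_start, find_start q)" "on_exhausted rt q = SE"
    and h: "horn E1" "horn E2" and y: "tape_at E1 E2 rt So (select_first rt q) y"
  shows "reach_within ((length (if rt then E2 else E1) + 1) * (prop_bound (tape_size E1 E2) + 1)) y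
    (tape_at E1 E2 rt So (if \<exists>j<length (if rt then E2 else E1). sel_query_sat q rt E1 E2 So
        j then SS else SE))"
proof -
  let ?L = "length (if rt then E2 else E1)" and ?P = "prop_bound (tape_size E1 E2) + 1"
  obtain B1 B2 where B: "y = (Cont (parse_start, Select False rt q False True), tape_cells B1 B2)"
    "formula_of B1 = E1" "formula_of B2 = E2" "map selected (if rt then B1 else B2) = So"
    using y unfolding tape_at_def select_first_def by blast
  have "length (map selected (if rt then B2 else B1)) = ?L"
    using B by (auto simp: length_formula_of[symmetric])
  then have "sel_shift False True (map selected (if rt then B2 else B1)) = unit_sel ?L 0"
    by (metis sel_shift_first)
  then have "reach_within 1 y (\<lambda>z. if 0 < ?L then loop_start q E1 E2 rt So 0 z else
      tape_at E1 E2 rt So SE z)"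
    unfolding B(1) by (rule select_shift_round[OF h q(3) B(2-4), unfolded q(4)])
  then have "reach_within (1 + ?L * ?P) y
      (tape_at E1 E2 rt So (if \<exists>j\<in>{0..<?L}. sel_query_sat q rt E1 E2 So j then SS else SE))"
  proof (rule reach_within_trans)
    fix z assume z: "if 0 < ?L then loop_start q E1 E2 rt So 0 z else tape_at E1 E2 rt So SE z"
    show "reach_within (?L * ?P) z
        (tape_at E1 E2 rt So (if \<exists>j\<in>{0..<?L}. sel_query_sat q rt E1 E2 So j then SS else SE))"
    proof (cases "0 < ?L")
      case True
      then show ?thesis using select_loop[OF q h refl, of 0 So z] z by simp
    next
      case False
      then show ?thesis using z by (simp add: reach_within_refl)
    qed
  qed
  moreover have "1 + ?L * ?P \<le> (?L + 1) * ?P" by simp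
  ultimately have "reach_within ((?L + 1) * ?P) y
      (tape_at E1 E2 rt So (if \<exists>j\<in>{0..<?L}. sel_query_sat q rt E1 E2 So j then SS else SE))"
    by (rule reach_within_mono)
  moreover have "(\<exists>j\<in>{0..<?L}. sel_query_sat q rt E1 E2 So j) \<longleftrightarrow> (\<exists>j<?L. sel_query_sat q rt E1 E2 So j)"
    by auto
  ultimately show ?thesis by (simp only:)
qed

definition neg_pair_sat :: "formula \<Rightarrow> formula \<Rightarrow> nat \<Rightarrow> nat \<Rightarrow> bool" where
  "neg_pair_sat E1 E2 i j = sel_query_sat Neg_Both True E1 E2 (unit_sel (length E1) i) j"

lemma neg_both_iteration:
  assumes h: "horn E1" "horn E2"
    and y: "tape_at E1 E2 True (unit_sel (length E1) i) (select_first True Neg_Both) y"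
  shows "reach_within ((length E2 + 1) * (prop_bound (tape_size E1 E2) + 1) + 1) y (\<lambda>z.
    if \<exists>j<length E2. neg_pair_sat E1 E2 i j then fst z = Rej
    else if Suc i < length E1 then tape_at E1 E2 True (unit_sel (length E1) (Suc i))
        (select_first True Neg_Both) z
    else fst z = Acc)"
proof -
  have "reach_within ((length E2 + 1) * (prop_bound (tape_size E1 E2) + 1)) y
    (tape_at E1 E2 True (unit_sel (length E1) i)
      (if \<exists>j<length E2. neg_pair_sat E1 E2 i j then Rej else select_next False Neg_Both))"
    using select_loop_first[where SS=Rej and SE="select_next False Neg_Both", OF _ _ _ _ h y]
    by (simp add: neg_pair_sat_def select_next_def)
  then show ?thesis
  proof (rule reach_within_trans)
    fix z assume z: "tape_at E1 E2 True (unit_sel (length E1) i)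
      (if \<exists>j<length E2. neg_pair_sat E1 E2 i j then Rej else select_next False Neg_Both) z"
    show "reach_within 1 z (\<lambda>z. if \<exists>j<length E2. neg_pair_sat E1 E2 i j then fst z = Rej
      else if Suc i < length E1 then tape_at E1 E2 True (unit_sel (length E1) (Suc i))
          (select_first True Neg_Both) z
      else fst z = Acc)"
    proof (cases "\<exists>j<length E2. neg_pair_sat E1 E2 i j")
      case True
      then show ?thesis using z by (auto simp: tape_at_def intro: reach_within_refl)
    next
      case False
      then obtain B1 B2 where B: "z = (Cont (parse_start,
          Select True False Neg_Both False False), tape_cells B1 B2)"
        "formula_of B1 = E1" "formula_of B2 = E2" "map selected B1 = unit_sel (length E1) i"
        using z unfolding tape_at_def select_next_def by auto
      have "map selected (if False then B2 else B1) = unit_sel (length E1) i"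
        "length (unit_sel (length E1) i) = length (if False then E2 else E1)"
        "map selected (if False then B1 else B2) = map selected B2"
        using B by simp_all
      from select_round[OF B(2,3) h this, where isN=True and pv=False and q=Neg_Both and q'=Neg_Both]
      obtain D1 D2 where "ctrl_round z = (if Suc i < length E1 then select_first True Neg_Both else Acc,
          tape_cells D1 D2)" "formula_of D1 = E1" "formula_of D2 = E2"
        "map selected D1 = unit_sel (length E1) (Suc i)"
        using B by (auto simp: sel_shift_next True_in_unit_sel)
      then show ?thesis using False by (intro reach_within_1) (auto intro: tape_atI)
    qed
  qed
qed

lemma neg_both_loop:
  assumes h: "horn E1" "horn E2"
  shows "i < length E1 \<Longrightarrow> tape_at E1 E2 True (unit_sel (length E1) i) (select_first True Neg_Both) y \<Longrightarrow>
    reach_within ((length E1 - i) * ((length E2 + 1) * (prop_bound (tape_size E1 E2) + 1) + 1)) y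
      (\<lambda>z. fst z = (if \<exists>i'\<in>{i..<length E1}. \<exists>j<length E2. neg_pair_sat E1 E2 i' j then Rej else Acc))"
proof (induction "length E1 - i" arbitrary: i y)
  case 0
  then show ?case by simp
next
  case (Suc m)
  let ?P = "(length E2 + 1) * (prop_bound (tape_size E1 E2) + 1) + 1"
    and ?sat = "\<lambda>i. \<exists>j<length E2. neg_pair_sat E1 E2 i j"
  have step: "reach_within ?P y (\<lambda>z. if ?sat i then fst z = Rej
      else if Suc i < length E1 then tape_at E1 E2 True (unit_sel (length E1) (Suc i))
          (select_first True Neg_Both) z
      else fst z = Acc)"
    using neg_both_iteration[OF h Suc.prems(2)] .
  have "length E1 - i = Suc (length E1 - Suc i)" using Suc.prems(1) by simp
  then have bound: "(length E1 - i) * ?P = ?P + (length E1 - Suc i) * ?P" by (simp only: mult_Suc)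
  have ex: "(\<exists>i'\<in>{i..<length E1}. ?sat i') \<longleftrightarrow> ?sat i \<or> (\<exists>i'\<in>{Suc i..<length E1}. ?sat i')"
    using bex_atLeastLessThan_eq[OF Suc.prems(1)] .
  show ?case
  proof (cases "\<not> ?sat i \<and> Suc i < length E1")
    case True
    have m: "m = length E1 - Suc i" using Suc.hyps(2) by arith
    have "reach_within ((length E1 - Suc i) * ?P) z
        (\<lambda>z. fst z = (if \<exists>i'\<in>{Suc i..<length E1}. ?sat i' then Rej else Acc))"
      if "tape_at E1 E2 True (unit_sel (length E1) (Suc i)) (select_first True Neg_Both) z" for z
      using Suc.hyps(1)[OF m _ that] True by blast
    then have "reach_within (?P + (length E1 - Suc i) * ?P) y
        (\<lambda>z. fst z = (if \<exists>i'\<in>{Suc i..<length E1}. ?sat i' then Rej else Acc))"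
      by (intro reach_within_trans[OF step]) (use True in simp)
    moreover have "(\<exists>i'\<in>{i..<length E1}. ?sat i') \<longleftrightarrow> (\<exists>i'\<in>{Suc i..<length E1}. ?sat i')"
      using ex True by blast
    ultimately show ?thesis by (simp only: bound)
  next
    case False
    then have "(\<exists>i'\<in>{i..<length E1}. ?sat i') \<longleftrightarrow> ?sat i" using ex by auto
    then have "reach_within ?P y
        (\<lambda>z. fst z = (if \<exists>i'\<in>{i..<length E1}. ?sat i' then Rej else Acc))"
      by (intro reach_within_weaken[OF step]) (use False in auto)
    then show ?thesis by (rule reach_within_mono) (unfold bound, rule le_add1)
  qed
qed

section \<open>Semantics of the queries\<close>

definition falsified :: "model \<Rightarrow> clause \<Rightarrow> bool" where
  "falsified I c = (\<forall>(v, p)\<in>set c. I v \<noteq> p)"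

lemma ball_zip_fst: "length S = length E \<Longrightarrow> (\<forall>k\<in>set (zip E S). P (fst k)) = (\<forall>c\<in>set E. P c)"
proof (induction E arbitrary: S)
  case (Cons e E)
  then obtain s S' where "S = s # S'" by (cases S) auto
  then show ?case using Cons by auto
qed simp

lemma ball_zip_unit_sel: "(\<forall>k\<in>set (zip E (unit_sel (length E) j)). snd k \<longrightarrow> P (fst k))
    = (j < length E \<longrightarrow> P (E ! j))"
proof -
  have "set (zip E (unit_sel (length E) j)) = {(E ! i, i = j) | i. i < length E}"
    by (auto simp: set_zip unit_sel_def)
  then show ?thesis by auto
qed

lemma clause_constraint_asserts: "asserts q r \<Longrightarrow> \<not> negates q r \<Longrightarrow> clause_constraint q r I k
    = clause_sat I (fst k)"
proof -
  assume a: "asserts q r" "\<not> negates q r"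
  obtain cl s where k: "k = (cl, s)" by fastforce
  have "(\<exists>(v, p)\<in>set cl. I v = p) = (\<exists>l\<in>set cl. I (fst l) = snd l)" by (simp add: case_prod_beta)
  then show ?thesis using a unfolding k by (simp add: clause_sat_def lit_sat_def)
qed

lemma clause_constraint_negates: "\<not> asserts q r \<Longrightarrow> negates q r \<Longrightarrow> clause_constraint q r I k
    = (snd k \<longrightarrow> falsified I (fst k))"
proof -
  assume a: "\<not> asserts q r" "negates q r"
  obtain cl s where k: "k = (cl, s)" by fastforce
  show ?thesis using a unfolding k by (simp add: falsified_def)
qed

lemma query_sat_Sat_Both: "length S1 = length E1 \<Longrightarrow> length S2 = length E2 \<Longrightarrow>
  query_sat Sat_Both (zip E1 S1) (zip E2 S2) = (\<exists>I. models I E1 \<and> models I E2)"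
  unfolding query_sat_def query_model_def models_def
  by (simp add: clause_constraint_asserts ball_zip_fst[where P="clause_sat _"])

lemma sel_query_sat_Sat1_Neg2: "length So = length E1 \<Longrightarrow> j < length E2 \<Longrightarrow>
  sel_query_sat Sat1_Neg2 True E1 E2 So j = (\<exists>I. models I E1 \<and> falsified I (E2 ! j))"
  unfolding sel_query_sat_def query_sat_def query_model_def models_def Let_def
  by (simp add: clause_constraint_asserts clause_constraint_negates
      ball_zip_fst[where P="clause_sat _"] ball_zip_unit_sel[where P="falsified _"])

lemma sel_query_sat_Sat2_Neg1: "length So = length E2 \<Longrightarrow> j < length E1 \<Longrightarrow>
  sel_query_sat Sat2_Neg1 False E1 E2 So j = (\<exists>I. models I E2 \<and> falsified I (E1 ! j))"
  unfolding sel_query_sat_def query_sat_def query_model_def models_def Let_def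
  by (simp add: clause_constraint_asserts clause_constraint_negates
      ball_zip_fst[where P="clause_sat _"] ball_zip_unit_sel[where P="falsified _"]) blast

lemma neg_pair_sat_iff: "i < length E1 \<Longrightarrow> j < length E2 \<Longrightarrow>
  neg_pair_sat E1 E2 i j = (\<exists>I. falsified I (E1 ! i) \<and> falsified I (E2 ! j))"
  unfolding neg_pair_sat_def sel_query_sat_def query_sat_def query_model_def Let_def
  by (simp add: clause_constraint_negates ball_zip_unit_sel[where P="falsified _"])

lemma bex_neg_pair_sat_iff:
  "(\<exists>i\<in>{0..<length E1}. \<exists>j<length E2. neg_pair_sat E1 E2 i j) \<longleftrightarrow>
    (\<exists>i<length E1. \<exists>j<length E2. \<exists>I. falsified I (E1 ! i) \<and> falsified I (E2 ! j))"
proof -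
  have "neg_pair_sat E1 E2 i j \<longleftrightarrow> (\<exists>I. falsified I (E1 ! i) \<and> falsified I (E2 ! j))"
    if "i < length E1" "j < length E2" for i j
    using neg_pair_sat_iff that by blast
  then show ?thesis by fastforce
qed

lemma not_models: "(\<not> models I E) = (\<exists>i<length E. falsified I (E ! i))"
proof -
  have c: "(\<not> clause_sat I c) = falsified I c" for c
    by (auto simp: clause_sat_def lit_sat_def falsified_def)
  have "(\<not> models I E) = (\<exists>c\<in>set E. \<not> clause_sat I c)" by (simp add: models_def)
  also have "\<dots> = (\<exists>c\<in>set E. falsified I c)" using c by simp
  also have "\<dots> = (\<exists>i<length E. falsified I (E ! i))" by (metis in_set_conv_nth)
  finally show ?thesis .
qed

lemma seq_equiv_iff:
  "seq_equiv [F1, F2] [F1] \<longleftrightarrow>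
    \<not> ((\<exists>I. models I F1 \<and> models I F2) \<and> (\<exists>j<length F2. \<exists>I. models I F1 \<and> falsified I (F2 ! j))) \<and>
    \<not> ((\<exists>j<length F1. \<exists>I. models I F2 \<and> falsified I (F1 ! j)) \<and>
       (\<exists>i<length F1. \<exists>j<length F2. \<exists>I. falsified I (F1 ! i) \<and> falsified I (F2 ! j)))"
proof -
  have "seq_equiv [F1, F2] [F1] \<longleftrightarrow> (\<forall>I J. (models I F1 = models J F1) \<longrightarrow> models I F2 \<or> \<not> models J F2)"
    unfolding seq_equiv_def by (auto simp: leq_form_def)
  also have "\<dots> \<longleftrightarrow> \<not> ((\<exists>J. models J F1 \<and> models J F2) \<and> (\<exists>I. models I F1 \<and> \<not> models I F2)) \<and>
       \<not> ((\<exists>J. \<not> models J F1 \<and> models J F2) \<and> (\<exists>I. \<not> models I F1 \<and> \<not> models I F2))"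
    by blast
  also have "\<dots> \<longleftrightarrow> \<not> ((\<exists>I. models I F1 \<and> models I F2)
      \<and> (\<exists>j<length F2. \<exists>I. models I F1 \<and> falsified I (F2 ! j))) \<and>
    \<not> ((\<exists>j<length F1. \<exists>I. models I F2 \<and> falsified I (F1 ! j)) \<and>
       (\<exists>i<length F1. \<exists>j<length F2. \<exists>I. falsified I (F1 ! i) \<and> falsified I (F2 ! j)))"
    unfolding not_models by blast
  finally show ?thesis .
qed

definition at_config :: "formula \<Rightarrow> formula \<Rightarrow> (parse_state \<times> phase) outcome \<Rightarrow> ctrl_config \<Rightarrow> bool" where
  "at_config E1 E2 R y \<longleftrightarrow> (\<exists>B1 B2. y = (R, tape_cells B1 B2) \<and> formula_of B1 = E1 \<and> formula_of B2 = E2)"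

lemma at_config_tape_at:
  assumes "at_config E1 E2 R y"
  obtains So where "length So = length (if rt then E1 else E2)" "tape_at E1 E2 rt So R y"
proof -
  obtain B1 B2 where B: "y = (R, tape_cells B1 B2)" "formula_of B1 = E1" "formula_of B2 = E2"
    using assms unfolding at_config_def by blast
  then have "length (map selected (if rt then B1 else B2)) = length (if rt then E1 else E2)"
    by (auto simp: length_formula_of[symmetric])
  moreover have "tape_at E1 E2 rt (map selected (if rt then B1 else B2)) R y"
    using B by (simp add: tape_atI)
  ultimately show ?thesis by (rule that)
qed

lemma tape_at_at_config: "tape_at E1 E2 rt So R y \<Longrightarrow> at_config E1 E2 R y"
  unfolding at_config_def tape_at_def by blast

lemma at_config_fst: "at_config E1 E2 R y \<Longrightarrow> fst y = R"
  unfolding at_config_def by auto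

lemma length_le_tape_size1: "length E1 \<le> tape_size E1 E2"
  unfolding tape_size_def by (induction E1) (auto simp: clause_size_def)

lemma length_le_tape_size2: "length E2 \<le> tape_size E1 E2"
  unfolding tape_size_def by (induction E2) (auto simp: clause_size_def)

definition phase_bound :: "nat \<Rightarrow> nat" where
  "phase_bound N = (N + 1) * (prop_bound N + 1)"

definition neg_both_bound :: "nat \<Rightarrow> nat" where
  "neg_both_bound N = 1 + N * (phase_bound N + 1)"

lemma phase_Sat_Both:
  assumes "prop_inv Sat_Both {} A1 A2" "formula_of A1 = E1" "formula_of A2 = E2"
  shows "reach_within (prop_bound (tape_size E1 E2))
      (Cont (parse_start, find_start Sat_Both), tape_cells A1 A2)
    (at_config E1 E2 (after_query Sat_Both (\<exists>I. models I E1 \<and> models I E2)))"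
proof -
  obtain k B1 B2 where k: "k \<le> prop_bound (tape_size E1 E2)"
    and run: "(ctrl_round ^^ k) (Cont (parse_start, find_start Sat_Both), tape_cells A1 A2) =
      (after_query Sat_Both (query_sat Sat_Both (map skeleton A1) (map skeleton A2)), tape_cells B1 B2)"
    and B: "map skeleton B1 = map skeleton A1" "map skeleton B2 = map skeleton A2"
    using propagation_bounded[OF assms(1)] length_tape_cells_eq[OF assms(2,3)] by auto
  have "query_sat Sat_Both (map skeleton A1) (map skeleton A2) = (\<exists>I. models I E1 \<and> models I E2)"
    using query_sat_Sat_Both[of "map selected A1" "formula_of A1" "map selected A2"
        "formula_of A2"] assms(2,3)
    by (simp add: skeleton_formula_of length_formula_of del: length_map)
        (simp add: length_formula_of[symmetric])
  moreover have "formula_of B1 = E1" "formula_of B2 = E2"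
    using skeleton_eqD[OF B(1)] skeleton_eqD[OF B(2)] assms(2,3) by auto
  ultimately show ?thesis using run k unfolding at_config_def by (intro reach_within_at[OF run]) auto
qed

lemma phase_Sat1_Neg2:
  assumes h: "horn E1" "horn E2" and y: "at_config E1 E2 (select_first True Sat1_Neg2) y"
  shows "reach_within (phase_bound (tape_size E1 E2)) y (at_config E1 E2
    (if \<exists>j<length E2. \<exists>I. models I E1 \<and> falsified I (E2 ! j) then Rej else
        select_first False Sat2_Neg1))"
proof -
  obtain So where So: "length So = length E1" "tape_at E1 E2 True So (select_first True Sat1_Neg2) y"
    by (rule at_config_tape_at[OF y, of True]) auto
  have R: "reach_within ((length E2 + 1) * (prop_bound (tape_size E1 E2) + 1)) y (tape_at E1 E2 True So
      (if \<exists>j<length E2. sel_query_sat Sat1_Neg2 True E1 E2 So j then Rej else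
          select_first False Sat2_Neg1))"
    using select_loop_first[where SS=Rej and SE="select_first False Sat2_Neg1", OF _ _ _ _ h So(2)]
    by simp
  have eq: "(\<exists>j<length E2. sel_query_sat Sat1_Neg2 True E1 E2 So j) \<longleftrightarrow>
      (\<exists>j<length E2. \<exists>I. models I E1 \<and> falsified I (E2 ! j))"
    using sel_query_sat_Sat1_Neg2[OF So(1)] by auto
  have le: "(length E2 + 1) * (prop_bound (tape_size E1 E2) + 1) \<le> phase_bound (tape_size E1 E2)"
    unfolding phase_bound_def using length_le_tape_size2[of E2 E1] by (intro mult_right_mono) simp_all
  show ?thesis
    using reach_within_mono[OF reach_within_weaken[OF R tape_at_at_config] le] unfolding eq .
qed

lemma phase_Sat2_Neg1:
  assumes h: "horn E1" "horn E2" and y: "at_config E1 E2 (select_first False Sat2_Neg1) y"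
  shows "reach_within (phase_bound (tape_size E1 E2)) y (at_config E1 E2
    (if \<exists>j<length E1. \<exists>I. models I E2 \<and> falsified I (E1 ! j) then select_first False Neg_Both else Acc))"
proof -
  obtain So where So: "length So = length E2" "tape_at E1 E2 False So (select_first False Sat2_Neg1) y"
    by (rule at_config_tape_at[OF y, of False]) auto
  have R: "reach_within ((length E1 + 1) * (prop_bound (tape_size E1 E2) + 1)) y (tape_at E1 E2 False So
      (if \<exists>j<length E1. sel_query_sat Sat2_Neg1 False E1 E2 So j then select_first False
          Neg_Both else Acc))"
    using select_loop_first[where SS="select_first False Neg_Both" and SE=Acc, OF _ _ _ _ h So(2)]
    by simp
  have eq: "(\<exists>j<length E1. sel_query_sat Sat2_Neg1 False E1 E2 So j) \<longleftrightarrow>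
      (\<exists>j<length E1. \<exists>I. models I E2 \<and> falsified I (E1 ! j))"
    using sel_query_sat_Sat2_Neg1[OF So(1)] by auto
  have le: "(length E1 + 1) * (prop_bound (tape_size E1 E2) + 1) \<le> phase_bound (tape_size E1 E2)"
    unfolding phase_bound_def using length_le_tape_size1[of E1 E2] by (intro mult_right_mono) simp_all
  show ?thesis
    using reach_within_mono[OF reach_within_weaken[OF R tape_at_at_config] le] unfolding eq .
qed

lemma neg_both_first_round:
  assumes h: "horn E1" "horn E2" and y: "at_config E1 E2 (select_first False Neg_Both) y"
  shows "reach_within 1 y (\<lambda>z. if 0 < length E1
    then tape_at E1 E2 True (unit_sel (length E1) 0) (select_first True Neg_Both) z else fst z = Acc)"
proof -
  obtain B1 B2 where B: "y = (Cont (parse_start, Select False False Neg_Both False True), tape_cells B1 B2)"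
    "formula_of B1 = E1" "formula_of B2 = E2"
    using y unfolding at_config_def select_first_def by blast
  have "map selected (if False then B2 else B1) = map selected B1"
    "length (map selected B1) = length (if False then E2 else E1)"
    "map selected (if False then B1 else B2) = map selected B2"
    using B by (simp_all add: length_formula_of[symmetric])
  from select_round[OF B(2,3) h this, where isN=False and pv=True and q=Neg_Both and q'=Neg_Both]
  obtain D1 D2 where D0: "ctrl_round y = (if True \<in> set (sel_shift False True (map selected B1))
      then on_selected False Neg_Both else on_exhausted False Neg_Both, tape_cells D1 D2)"
    "formula_of D1 = E1" "formula_of D2 = E2" "map selected D1 = sel_shift False True (map selected B1)"
    using B(1) by auto
  have "sel_shift False True (map selected B1) = unit_sel (length E1) 0"
    using sel_shift_first[of "map selected B1"] B(2) length_formula_of[of B1] by simp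
  then have D: "ctrl_round y = (if 0 < length E1 then select_first True Neg_Both else Acc, tape_cells D1 D2)"
    "formula_of D1 = E1" "formula_of D2 = E2" "map selected D1 = unit_sel (length E1) 0"
    using D0 by (simp_all add: True_in_unit_sel)
  then show ?thesis by (intro reach_within_1) (auto intro: tape_atI)
qed

lemma neg_both_bound_ge:
  "1 + length E1 * ((length E2 + 1) * (prop_bound (tape_size E1 E2) + 1) + 1) \<le>
    neg_both_bound (tape_size E1 E2)"
proof -
  have "(length E2 + 1) * (prop_bound (tape_size E1 E2) + 1) + 1 \<le> phase_bound (tape_size E1 E2) + 1"
    unfolding phase_bound_def using length_le_tape_size2[of E2 E1]
    by (intro add_right_mono mult_right_mono) simp_all
  then show ?thesis unfolding neg_both_bound_def using length_le_tape_size1[of E1 E2]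
    by (intro add_left_mono mult_mono) simp_all
qed

lemma phase_Neg_Both:
  assumes h: "horn E1" "horn E2" and y: "at_config E1 E2 (select_first False Neg_Both) y"
  shows "reach_within (neg_both_bound (tape_size E1 E2)) y (\<lambda>z. fst z =
    (if \<exists>i<length E1. \<exists>j<length E2. \<exists>I. falsified I (E1 ! i) \<and> falsified I (E2 ! j) then Rej else Acc))"
proof -
  let ?L = "length E1" and ?P = "(length E2 + 1) * (prop_bound (tape_size E1 E2) + 1) + 1"
  have "reach_within (1 + ?L * ?P) y
      (\<lambda>z. fst z = (if \<exists>i\<in>{0..<?L}. \<exists>j<length E2. neg_pair_sat E1 E2 i j then Rej else Acc))"
  proof (rule reach_within_trans[OF neg_both_first_round[OF h y]])
    fix z assume z: "if 0 < ?L then tape_at E1 E2 True (unit_sel ?L 0) (select_first True Neg_Both) z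
      else fst z = Acc"
    show "reach_within (?L * ?P) z
        (\<lambda>z. fst z = (if \<exists>i\<in>{0..<?L}. \<exists>j<length E2. neg_pair_sat E1 E2 i j then Rej else Acc))"
    proof (cases "0 < ?L")
      case True
      then show ?thesis using neg_both_loop[OF h True] z by simp
    next
      case False
      then show ?thesis using z by (simp add: reach_within_refl)
    qed
  qed
  then show ?thesis
    using reach_within_mono[OF _ neg_both_bound_ge] unfolding bex_neg_pair_sat_iff by blast
qed

lemma phases_after_Sat2_Neg1:
  assumes h: "horn E1" "horn E2" and y: "at_config E1 E2 (select_first False Sat2_Neg1) y"
  shows "reach_within (phase_bound (tape_size E1 E2) + neg_both_bound (tape_size E1 E2)) y (\<lambda>z. fst z =
    (if (\<exists>j<length E1. \<exists>I. models I E2 \<and> falsified I (E1 ! j)) \<and>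
        (\<exists>i<length E1. \<exists>j<length E2. \<exists>I. falsified I (E1 ! i) \<and> falsified I (E2 ! j))
            then Rej else Acc))"
proof (rule reach_within_trans[OF phase_Sat2_Neg1[OF h y]])
  fix z assume z: "at_config E1 E2 (if \<exists>j<length E1. \<exists>I. models I E2 \<and> falsified I (E1 ! j)
    then select_first False Neg_Both else Acc) z"
  show "reach_within (neg_both_bound (tape_size E1 E2)) z (\<lambda>z. fst z =
    (if (\<exists>j<length E1. \<exists>I. models I E2 \<and> falsified I (E1 ! j)) \<and>
        (\<exists>i<length E1. \<exists>j<length E2. \<exists>I. falsified I (E1 ! i) \<and> falsified I (E2 ! j))
            then Rej else Acc))"
  proof (cases "\<exists>j<length E1. \<exists>I. models I E2 \<and> falsified I (E1 ! j)")
    case True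
    then show ?thesis using phase_Neg_Both[OF h] z by simp
  next
    case False
    then have "fst z = Acc" using at_config_fst[OF z] by (simp only: if_not_P[OF False] if_False)
    then show ?thesis by (intro reach_within_refl) (simp only: False simp_thms if_False)
  qed
qed

lemma phases_after_Sat1_Neg2:
  assumes h: "horn E1" "horn E2" and y: "at_config E1 E2 (select_first True Sat1_Neg2) y"
  shows "reach_within (phase_bound (tape_size E1 E2) + (phase_bound (tape_size E1 E2) +
      neg_both_bound (tape_size E1 E2))) y (\<lambda>z. fst z =
    (if (\<exists>j<length E2. \<exists>I. models I E1 \<and> falsified I (E2 ! j)) \<or>
        (\<exists>j<length E1. \<exists>I. models I E2 \<and> falsified I (E1 ! j)) \<and>
        (\<exists>i<length E1. \<exists>j<length E2. \<exists>I. falsified I (E1 ! i) \<and> falsified I (E2 ! j))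
            then Rej else Acc))"
proof (rule reach_within_trans[OF phase_Sat1_Neg2[OF h y]])
  fix z assume z: "at_config E1 E2 (if \<exists>j<length E2. \<exists>I. models I E1 \<and> falsified I (E2 ! j)
    then Rej else select_first False Sat2_Neg1) z"
  show "reach_within (phase_bound (tape_size E1 E2) + neg_both_bound (tape_size E1 E2)) z (\<lambda>z. fst z =
    (if (\<exists>j<length E2. \<exists>I. models I E1 \<and> falsified I (E2 ! j)) \<or>
        (\<exists>j<length E1. \<exists>I. models I E2 \<and> falsified I (E1 ! j)) \<and>
        (\<exists>i<length E1. \<exists>j<length E2. \<exists>I. falsified I (E1 ! i) \<and> falsified I (E2 ! j))
            then Rej else Acc))"
  proof (cases "\<exists>j<length E2. \<exists>I. models I E1 \<and> falsified I (E2 ! j)")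
    case True
    then have "fst z = Rej" using at_config_fst[OF z] by (simp only: if_P[OF True] if_True)
    then show ?thesis by (intro reach_within_refl) (simp only: True simp_thms if_True)
  next
    case False
    then have "at_config E1 E2 (select_first False Sat2_Neg1) z" using z
        by (simp only: if_not_P[OF False] if_False)
    then show ?thesis using phases_after_Sat2_Neg1[OF h] by (simp only: False simp_thms)
  qed
qed

definition round_bound :: "nat \<Rightarrow> nat" where
  "round_bound N = prop_bound N + 2 * phase_bound N + neg_both_bound N"

lemma round_bound_poly: "round_bound N * (2 * N + 2) \<le> 30 * (N + 1) ^ 5"
proof -
  have "round_bound N * (2 * N + 2) = 4*N^5 + 22*N^4 + 52*N^3 + 66*N^2 + 44*N + 12"
    unfolding round_bound_def neg_both_bound_def phase_bound_def prop_bound_def by algebra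
  moreover have "30 * (N + 1) ^ 5 = 30*N^5 + 150*N^4 + 300*N^3 + 300*N^2 + 150*N + (30::nat)"
    by algebra
  ultimately show ?thesis by linarith
qed

lemma ctrl_decides:
  assumes h: "horn F1" "horn F2" and A: "prop_inv Sat_Both {} A1 A2" "formula_of A1
      = F1" "formula_of A2 = F2"
  shows "fst ((ctrl_round ^^ round_bound (tape_size F1 F2))
      (Cont (parse_start, find_start Sat_Both), tape_cells A1 A2)) =
    (if seq_equiv [F1, F2] [F1] then Acc else Rej)"
proof -
  let ?N = "tape_size F1 F2" and ?x = "(Cont (parse_start, find_start Sat_Both), tape_cells A1 A2)"
  let ?sat12 = "\<exists>I. models I F1 \<and> models I F2"
    and ?sat1_neg2 = "\<exists>j<length F2. \<exists>I. models I F1 \<and> falsified I (F2 ! j)"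
    and ?sat2_neg1 = "\<exists>j<length F1. \<exists>I. models I F2 \<and> falsified I (F1 ! j)"
    and ?neg12 = "\<exists>i<length F1. \<exists>j<length F2. \<exists>I. falsified I (F1 ! i) \<and> falsified I (F2 ! j)"
  have "reach_within (prop_bound ?N + (phase_bound ?N + (phase_bound ?N + neg_both_bound ?N))) ?x
      (\<lambda>z. fst z = (if seq_equiv [F1, F2] [F1] then Acc else Rej))"
  proof (rule reach_within_trans[OF phase_Sat_Both[OF A]])
    fix z assume z: "at_config F1 F2 (after_query Sat_Both ?sat12) z"
    show "reach_within (phase_bound ?N + (phase_bound ?N + neg_both_bound ?N)) z
      (\<lambda>z. fst z = (if seq_equiv [F1, F2] [F1] then Acc else Rej))"
    proof (cases ?sat12)
      case True
      then have eq: "(if seq_equiv [F1, F2] [F1] then Acc else Rej) =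
          (if ?sat1_neg2 \<or> ?sat2_neg1 \<and> ?neg12 then Rej else Acc)"
        unfolding seq_equiv_iff by auto
      have "at_config F1 F2 (select_first True Sat1_Neg2) z" using z True by simp
      then show ?thesis unfolding eq by (rule phases_after_Sat1_Neg2[OF h])
    next
      case False
      then have eq: "(if seq_equiv [F1, F2] [F1] then Acc else Rej)
          = (if ?sat2_neg1 \<and> ?neg12 then Rej else Acc)"
        unfolding seq_equiv_iff by auto
      have "at_config F1 F2 (select_first False Sat2_Neg1) z" using z False by simp
      then show ?thesis unfolding eq by (rule reach_within_mono[OF phases_after_Sat2_Neg1[OF h]]) simp
    qed
  qed
  then have "reach_within (round_bound ?N) ?x
      (\<lambda>z. fst z = (if seq_equiv [F1, F2] [F1] then Acc else Rej))"
    unfolding round_bound_def mult_2 add.assoc .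
  then show ?thesis by (rule reach_within_halted) simp
qed

definition init_lit :: "nat \<times> bool \<Rightarrow> lit_info" where
  "init_lit vp = \<lparr>lvar = fst vp, lpos = snd vp, lread = 0, ltrue = False, lmatch = False\<rparr>"
definition init_clause :: "clause \<Rightarrow> clause_info" where
  "init_clause c = \<lparr>lits = map init_lit c, selected = False, forcing = None\<rparr>"
definition init_clauses :: "formula \<Rightarrow> clause_info list" where
  "init_clauses F = map init_clause F"

lemma formula_of_init: "formula_of (init_clauses F) = F"
  by (simp add: formula_of_def init_clauses_def init_clause_def init_lit_def comp_def)

lemma enc_plain_cell: "enc_cell (Cell b False False False False None) = b"
  by (simp add: enc_cell_def nat_of_bool_option_def)

lemma enc_bit_cells: "map enc_cell (bit_cells 0 ss) = ss"
  by (induction ss) (auto simp: enc_plain_cell)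

lemma enc_lits_cells:
  "map enc_cell (lits_cells (False, False) (map init_lit c) False None) = enc_clause c"
proof (induction c)
  case Nil then show ?case by (simp add: enc_clause_def enc_plain_cell)
next
  case (Cons l c)
  then show ?case by (simp add: enc_clause_def enc_lit_def init_lit_def enc_plain_cell enc_bit_cells)
qed

lemma enc_init_tape: "map enc_cell (tape_cells (init_clauses F1) (init_clauses F2)) = enc_pair F1 F2"
proof -
  have "map enc_cell (concat (map clause_cells (init_clauses F))) = concat (map enc_clause F)" for F
    by (induction F) (auto simp: init_clauses_def clause_cells_def init_clause_def enc_lits_cells)
  then show ?thesis by (simp add: tape_cells_def formula_cells_def enc_pair_def enc_formula_def
      formula_end_def enc_plain_cell)
qed

lemma prop_inv_init: "horn F1 \<Longrightarrow> horn F2 \<Longrightarrow> prop_inv q {} (init_clauses F1) (init_clauses F2)"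
proof -
  assume h: "horn F1" "horn F2"
  have "\<forall>l\<in>set (all_lits (init_clauses F1) @ all_lits (init_clauses F2)). \<not> ltrue l \<and> lread l = 0"
    by (auto simp: all_lits_def init_clauses_def init_clause_def init_lit_def)
  moreover have "horn (formula_of (init_clauses F1))" "horn (formula_of (init_clauses F2))"
    using h by (simp_all add: formula_of_init)
  ultimately show ?thesis by (rule prop_inv_clean)
qed

lemma valid_bit_cells: "set ss \<subseteq> {1, 2} \<Longrightarrow> \<forall>x\<in>set (bit_cells j ss). valid_cell x"
  by (induction ss arbitrary: j) (auto simp: valid_cell_def)

lemma valid_lits_cells: "\<forall>x\<in>set (lits_cells pf ls sel s). valid_cell x"
proof (induction ls arbitrary: pf)
  case (Cons l ls)
  have "\<forall>x\<in>set (bit_cells (lread l) (bits (lvar l))). valid_cell x"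
    by (rule valid_bit_cells[OF set_bits])
  then show ?case using Cons by (auto simp: valid_cell_def)
qed (simp add: valid_cell_def)

lemma valid_tape_cells: "\<forall>x\<in>set (tape_cells A1 A2). valid_cell x"
  using valid_lits_cells by (auto simp: tape_cells_def formula_cells_def clause_cells_def
      formula_end_def valid_cell_def)

lemma decider_run:
  assumes h: "horn F1" "horn F2"
  shows "tm_state (tm_run (sweep_tm ctrl_step phase_end (parse_start, find_start Sat_Both))
      (30 * (length (enc_pair F1 F2) + 1) ^ 5) (tm_init (enc_pair F1 F2))) =
    (if seq_equiv [F1, F2] [F1] then 1 else 2)"
proof -
  let ?s0 = "(parse_start, find_start Sat_Both)" and ?N = "tape_size F1 F2"
  obtain x xs where cells: "tape_cells (init_clauses F1) (init_clauses F2) = x # xs"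
    by (cases "tape_cells (init_clauses F1) (init_clauses F2)")
        (auto simp: tape_cells_def formula_cells_def)
  have enc: "enc_pair F1 F2 = map enc_cell (x # xs)" using enc_init_tape cells by metis
  have len: "length (x # xs) = ?N" "length (enc_pair F1 F2) = ?N"
    using length_tape_cells_eq[OF formula_of_init formula_of_init, of F1 F2] cells enc by simp_all
  have init: "tm_init (enc_pair F1 F2) =
      (4 * state_code ?s0 ?s0, replicate 0 0, enc_cell x, map enc_cell xs @ replicate 0 0)"
    by (simp add: enc tm_init_def state_code_def)
  obtain r zs where rounds: "(sweep_round ctrl_step phase_end ^^ round_bound ?N)
      (Cont ?s0, x # xs) = (r, zs)"
    by fastforce
  have r: "r = (if seq_equiv [F1, F2] [F1] then Acc else Rej)"
    using ctrl_decides[OF h prop_inv_init[OF h] formula_of_init formula_of_init] rounds cells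
    by (simp add: ctrl_round_def)
  have "round_bound ?N * (2 * length (x # xs) + 2) \<le> 30 * (length (enc_pair F1 F2) + 1) ^ 5"
    using round_bound_poly[of ?N] len by simp
  moreover have "\<forall>s x. base (snd (ctrl_step s x)) = base x"
    by (simp add: ctrl_step_def base_cell_step)
  ultimately show ?thesis
    using sweep_tm_simulates[where a=0 and b=0,
        OF _ valid_tape_cells[of "init_clauses F1" "init_clauses F2",
        unfolded cells] rounds] r init by auto
qed

theorem theorem10:
  shows "\<exists>M c k. wf_tm M \<and>
    (\<forall>F1 F2. horn F1 \<longrightarrow> horn F2 \<longrightarrow>
       tm_state (tm_run M (c * (length (enc_pair F1 F2) + 1) ^ k)
                   (tm_init (enc_pair F1 F2)))
       = (if seq_equiv [F1, F2] [F1] then 1 else 2))"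
proof (intro exI conjI allI impI)
  show "wf_tm (sweep_tm ctrl_step phase_end (parse_start, find_start Sat_Both))"
    by (rule wf_sweep_tm) simp
  fix F1 F2 assume "horn F1" "horn F2"
  then show "tm_state (tm_run (sweep_tm ctrl_step phase_end (parse_start, find_start Sat_Both))
      (30 * (length (enc_pair F1 F2) + 1) ^ 5) (tm_init (enc_pair F1 F2))) =
    (if seq_equiv [F1, F2] [F1] then 1 else 2)"
    by (rule decider_run)
qed

end
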